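(* Let $f\in M^1$, $N\in L^1(\mathbb{R}^2)$, and suppose $G=V_\varphi f+N$ is observed. Let $\Delta$ be the support of $N$ (unknown), and suppose that for some $R>0$, \[ \rho(\Delta,R)<\tfrac12\left(1-e^{-\pi/R^2}\right). \] Then $\delta(\Delta)<\tfrac12$, and the minimization problem \[ \beta(G)=\arg\min_{g\in M^1}\Vert G-V_\varphi g\Vert_1 \] has a unique solution, which satisfies $\beta(G)=f$.
   Context: Let $\varphi(t)=2^{1/4}e^{-\pi t^2}$. The STFT is $V_\varphi f(x,\omega)=\int_{\mathbb{R}} f(t)\overline{\varphi(t-x)}e^{-2\pi i \omega t}\,dt$. The modulation space $M^1$ is $\{f\in\mathcal{S}'(\mathbb{R}): \Vert V_\varphi f\Vert_{1}<\infty\}$, with $\Vert\cdot\Vert_1$ the $L^1(\mathbb{R}^2)$ norm. For $A\subset\mathbb{R}^2$, $P_A$ is multiplication by $\chi_A$. The planar maximum Nyquist density is $\rho(\Delta,R):=\sup_{z\in\mathbb{R}^2}|\Delta\cap(z+D_{1/R})|$, with $D_{1/R}$ the disc of radius $1/R$ centered at the origin and $|\cdot|$ Lebesgue measure. Also $\delta(\Delta):=\sup_{f\in M^1}\frac{\Vert P_\Delta(V_\varphi f)\Vert_1}{\Vert V_\varphi f\Vert_1}$ (supremum over nonzero $f$). *)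

theory Defs
  imports "HOL-Analysis.Analysis"
begin

definition gwin :: "real \<Rightarrow> real" where
  "gwin t = 2 powr (1/4) * exp (- pi * t\<^sup>2)"

definition stft :: "(real \<Rightarrow> complex) \<Rightarrow> real \<times> real \<Rightarrow> complex" where
  "stft f = (\<lambda>(x, \<omega>). LINT t|lborel.
      f t * cnj (complex_of_real (gwin (t - x))) * exp (- 2 * complex_of_real pi * \<i> * complex_of_real \<omega> * complex_of_real t))"

definition L1norm :: "(real \<times> real \<Rightarrow> complex) \<Rightarrow> real" where
  "L1norm F = (\<integral>z. cmod (F z) \<partial>lborel)"

text \<open>Modulation space M^1, realised by its (integrable) function representatives:
  M^1 is continuously embedded in L^1(R).\<close>
definition M1 :: "(real \<Rightarrow> complex) set" where
  "M1 = {f. integrable lborel f \<and> integrable lborel (stft f)}"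

definition nyq_rho :: "(real \<times> real) set \<Rightarrow> real \<Rightarrow> real" where
  "nyq_rho \<Delta> R = (SUP z. measure lborel (\<Delta> \<inter> cball z (1 / R)))"

definition conc_delta :: "(real \<times> real) set \<Rightarrow> real" where
  "conc_delta \<Delta> = (SUP f \<in> {f \<in> M1. L1norm (stft f) \<noteq> 0}.
      L1norm (\<lambda>z. indicator \<Delta> z * stft f z) / L1norm (stft f))"

end

theory Submission
  imports Defs "HOL-Probability.Probability"
begin

text \<open>
  Around any point z, the STFT of h with Gaussian window factors as V h (z + w) =
  (phase) * e^(-pi |w|^2/2) * Psi(w), where Psi is an entire function of the conjugate
  coordinate of w.  Rotation invariance of Lebesgue measure kills all nonconstant terms of
  Psi on centred discs, so pi s^2 |V h z| is bounded by the integral of |Psi| over the disc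
  of radius s; integrating this in s against the Gaussian profile gives
  2 (1 - e^(-pi r^2/2)) |V h z| <= integral of |V h| over the disc of radius r around z.
  Integrating over Delta and applying Fubini bounds the concentration of V h on Delta by
  kappa = rho(Delta, R) / (2 (1 - e^(-pi/(2 R^2)))) < 1/2.
  For the observation G = V f + N supported off Delta this yields
  ||G - V g||_1 >= ||N||_1 + (1 - 2 kappa) ||V (g - f)||_1, so f is a minimiser, and every
  minimiser g has V (g - f) = 0, hence g = f almost everywhere by uniqueness of the Fourier
  transform.
\<close>

lemma borel_measurable_continuous_compose:
  assumes "continuous_on UNIV T" and "g \<in> borel_measurable borel"
  shows "(\<lambda>z. g (T z)) \<in> borel_measurable borel"
  using measurable_compose[OF borel_measurable_continuous_onI[OF assms(1)] assms(2)] .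

lemma cball_in_sets_borel [measurable]: "cball (c :: 'a::metric_space) s \<in> sets borel"
  by simp

lemma borel_measurable_lborel_pair:
  fixes f :: "'a::euclidean_space \<times> 'b::euclidean_space \<Rightarrow> 'c::topological_space"
  shows "f \<in> borel_measurable borel \<Longrightarrow> f \<in> borel_measurable (lborel \<Otimes>\<^sub>M lborel)"
  unfolding lborel_prod by (simp add: measurable_cong_sets[OF sets_lborel refl])

lemma measurable_fst_borel [measurable]:
  "fst \<in> borel_measurable (borel :: ('a::topological_space \<times> 'b::topological_space) measure)"
  by (rule borel_measurable_continuous_onI) (intro continuous_intros)

lemma measurable_snd_borel [measurable]:
  "snd \<in> borel_measurable (borel :: ('a::topological_space \<times> 'b::topological_space) measure)"
  by (rule borel_measurable_continuous_onI) (intro continuous_intros)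

lemma integrable_lborel_pair_mult:
  fixes f :: "'a::euclidean_space \<Rightarrow> real" and g :: "'b::euclidean_space \<Rightarrow> real"
  assumes f: "integrable lborel f" and g: "integrable lborel g"
  shows "integrable (lborel \<Otimes>\<^sub>M lborel) (\<lambda>p. f (fst p) * g (snd p))"
proof (rule integrableI_bounded)
  have [measurable]: "f \<in> borel_measurable lborel" "g \<in> borel_measurable lborel"
    using f g by auto
  show "(\<lambda>p. f (fst p) * g (snd p)) \<in> borel_measurable (lborel \<Otimes>\<^sub>M lborel)" by measurable
  have "(\<integral>\<^sup>+p. ennreal (norm (f (fst p) * g (snd p))) \<partial>(lborel \<Otimes>\<^sub>M lborel))
      = (\<integral>\<^sup>+x. ennreal (norm (f x)) * (\<integral>\<^sup>+y. ennreal (norm (g y)) \<partial>lborel) \<partial>lborel)"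
    by (subst lborel.nn_integral_fst[symmetric], simp)
       (subst nn_integral_cmult[symmetric], auto simp: abs_mult ennreal_mult)
  also have "\<dots> = (\<integral>\<^sup>+x. ennreal (norm (f x)) \<partial>lborel) * (\<integral>\<^sup>+y. ennreal (norm (g y)) \<partial>lborel)"
    by (subst nn_integral_multc) auto
  also have "\<dots> < \<infinity>"
    using f g unfolding integrable_iff_bounded by (simp add: ennreal_mult_less_top)
  finally show "(\<integral>\<^sup>+p. ennreal (norm (f (fst p) * g (snd p))) \<partial>(lborel \<Otimes>\<^sub>M lborel)) < \<infinity>" .
qed

lemma nn_integral_lborel_translate:
  fixes f :: "'a::euclidean_space \<Rightarrow> ennreal"
  assumes "f \<in> borel_measurable borel"
  shows "(\<integral>\<^sup>+w. f (z + w) \<partial>lborel) = (\<integral>\<^sup>+w. f w \<partial>lborel)"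
  using nn_integral_distr[of "(+) z" lborel borel f] assms by (simp add: lborel_distr_plus)

lemma borel_measurable_cnj [measurable (raw)]:
  "f \<in> borel_measurable M \<Longrightarrow> (\<lambda>x. cnj (f x)) \<in> borel_measurable M"
  by (rule measurable_compose[OF _ borel_measurable_continuous_onI]) (auto intro: continuous_intros)

section \<open>Rotation invariance of planar Lebesgue measure\<close>

lemma nn_integral_lborel_shear_fst:
  fixes g :: "real \<times> real \<Rightarrow> ennreal"
  assumes [measurable]: "g \<in> borel_measurable borel"
  shows "(\<integral>\<^sup>+z. g (fst z + c * snd z, snd z) \<partial>lborel) = (\<integral>\<^sup>+z. g z \<partial>lborel)"
proof -
  have [measurable]: "(\<lambda>z. g (fst z + c * snd z, snd z)) \<in> borel_measurable borel"
    by (rule borel_measurable_continuous_compose[OF _ assms]) (intro continuous_intros)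
  have "(\<integral>\<^sup>+z. g (fst z + c * snd z, snd z) \<partial>lborel)
      = (\<integral>\<^sup>+y. (\<integral>\<^sup>+x. g (x + c * y, y) \<partial>lborel) \<partial>lborel)"
    by (subst lborel_prod[symmetric], subst lborel_pair.nn_integral_snd[symmetric])
       (auto simp: lborel_prod)
  also have "\<dots> = (\<integral>\<^sup>+y. (\<integral>\<^sup>+x. g (x, y) \<partial>lborel) \<partial>lborel)"
  proof (rule nn_integral_cong)
    fix y :: real
    have "(\<integral>\<^sup>+x. g (x, y) \<partial>lborel) = ennreal \<bar>1\<bar> * (\<integral>\<^sup>+x. g (c * y + 1 * x, y) \<partial>lborel)"
      by (rule nn_integral_real_affine) auto
    then show "(\<integral>\<^sup>+x. g (x + c * y, y) \<partial>lborel) = (\<integral>\<^sup>+x. g (x, y) \<partial>lborel)"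
      by (simp add: add.commute)
  qed
  also have "\<dots> = (\<integral>\<^sup>+z. g z \<partial>lborel)"
    by (subst lborel_prod[symmetric], subst lborel_pair.nn_integral_snd[symmetric])
       (auto simp: lborel_prod)
  finally show ?thesis .
qed

lemma nn_integral_lborel_shear_snd:
  fixes g :: "real \<times> real \<Rightarrow> ennreal"
  assumes [measurable]: "g \<in> borel_measurable borel"
  shows "(\<integral>\<^sup>+z. g (fst z, snd z + c * fst z) \<partial>lborel) = (\<integral>\<^sup>+z. g z \<partial>lborel)"
proof -
  have [measurable]: "(\<lambda>z. g (fst z, snd z + c * fst z)) \<in> borel_measurable borel"
    by (rule borel_measurable_continuous_compose[OF _ assms]) (intro continuous_intros)
  have "(\<integral>\<^sup>+z. g (fst z, snd z + c * fst z) \<partial>lborel)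
      = (\<integral>\<^sup>+x. (\<integral>\<^sup>+y. g (x, y + c * x) \<partial>lborel) \<partial>lborel)"
    by (subst lborel_prod[symmetric], subst lborel.nn_integral_fst[symmetric])
       (auto simp: lborel_prod)
  also have "\<dots> = (\<integral>\<^sup>+x. (\<integral>\<^sup>+y. g (x, y) \<partial>lborel) \<partial>lborel)"
  proof (rule nn_integral_cong)
    fix x :: real
    have "(\<integral>\<^sup>+y. g (x, y) \<partial>lborel) = ennreal \<bar>1\<bar> * (\<integral>\<^sup>+y. g (x, c * x + 1 * y) \<partial>lborel)"
      by (rule nn_integral_real_affine) auto
    then show "(\<integral>\<^sup>+y. g (x, y + c * x) \<partial>lborel) = (\<integral>\<^sup>+y. g (x, y) \<partial>lborel)"
      by (simp add: add.commute)
  qed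
  also have "\<dots> = (\<integral>\<^sup>+z. g z \<partial>lborel)"
    by (subst lborel_prod[symmetric], subst lborel.nn_integral_fst[symmetric])
       (auto simp: lborel_prod)
  finally show ?thesis .
qed

definition plane_rotation :: "real \<Rightarrow> real \<Rightarrow> real \<times> real \<Rightarrow> real \<times> real" where
  "plane_rotation a b z = (a * fst z - b * snd z, b * fst z + a * snd z)"

lemma plane_rotation_measurable [measurable]: "plane_rotation a b \<in> borel_measurable borel"
  unfolding plane_rotation_def by (rule borel_measurable_continuous_onI) (intro continuous_intros)

lemma norm_plane_rotation:
  assumes "a\<^sup>2 + b\<^sup>2 = 1"
  shows "norm (plane_rotation a b z) = norm z"
proof -
  have "(a * fst z - b * snd z)\<^sup>2 + (b * fst z + a * snd z)\<^sup>2 = (a\<^sup>2 + b\<^sup>2) * ((fst z)\<^sup>2 + (snd z)\<^sup>2)"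
    by (simp add: power2_eq_square algebra_simps)
  then show ?thesis
    using assms by (cases z) (simp add: plane_rotation_def norm_Pair)
qed

text \<open>A rotation by an angle other than pi is the product of three shears
  (x, y) \<mapsto> (x + t y, y), (x, y) \<mapsto> (x, y + b x), (x, y) \<mapsto> (x + t y, y) with t = -b/(1 + a).\<close>

lemma plane_rotation_eq_shears:
  assumes ab: "a\<^sup>2 + b\<^sup>2 = 1" "a \<noteq> -1" and t: "t = - b / (1 + a)"
  shows "plane_rotation a b z =
    (let z1 = (fst z + t * snd z, snd z); z2 = (fst z1, snd z1 + b * fst z1)
     in (fst z2 + t * snd z2, snd z2))"
proof -
  have a1: "1 + a \<noteq> 0" using ab by auto
  have ta: "t * (1 + a) = - b"
    using a1 unfolding t by simp
  have "1 + t * b = (1 + a - b\<^sup>2) / (1 + a)"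
    using a1 unfolding t by (simp add: field_simps power2_eq_square)
  also have "1 + a - b\<^sup>2 = a * (1 + a)"
    using ab(1) by (simp add: power2_eq_square algebra_simps)
  finally have tb: "1 + t * b = a"
    using a1 by simp
  have "t * (2 + t * b) * (1 + a)\<^sup>2 = (t * (1 + a)) * (2 * (1 + a) + (t * (1 + a)) * b)"
    by (simp add: power2_eq_square algebra_simps)
  also have "\<dots> = (- b) * (2 * (1 + a) - b\<^sup>2)"
    unfolding ta by (simp add: power2_eq_square algebra_simps)
  also have "2 * (1 + a) - b\<^sup>2 = (1 + a)\<^sup>2"
    using ab(1) by (simp add: power2_eq_square algebra_simps)
  finally have "t * (2 + t * b) * (1 + a)\<^sup>2 = (- b) * (1 + a)\<^sup>2" .
  then have tt: "t * (2 + t * b) = - b"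
    using a1 by (subst (asm) mult_right_cancel) auto
  have "fst z + t * snd z + t * (snd z + b * (fst z + t * snd z))
      = (1 + t * b) * fst z + t * (2 + t * b) * snd z"
    "snd z + b * (fst z + t * snd z) = b * fst z + (1 + t * b) * snd z"
    by (simp_all add: algebra_simps)
  then show ?thesis
    unfolding tb tt by (simp add: plane_rotation_def Let_def)
qed

lemma nn_integral_plane_rotation:
  fixes g :: "real \<times> real \<Rightarrow> ennreal"
  assumes [measurable]: "g \<in> borel_measurable borel" and ab: "a\<^sup>2 + b\<^sup>2 = 1" "a \<noteq> -1"
  shows "(\<integral>\<^sup>+z. g (plane_rotation a b z) \<partial>lborel) = (\<integral>\<^sup>+z. g z \<partial>lborel)"
proof -
  define t where "t = - b / (1 + a)"
  define g1 where "g1 z = g (fst z + t * snd z, snd z)" for z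
  define g2 where "g2 z = g1 (fst z, snd z + b * fst z)" for z
  have g1m [measurable]: "g1 \<in> borel_measurable borel"
    unfolding g1_def by (rule borel_measurable_continuous_compose[OF _ assms(1)]) (intro continuous_intros)
  have [measurable]: "g2 \<in> borel_measurable borel"
    unfolding g2_def by (rule borel_measurable_continuous_compose[OF _ g1m]) (intro continuous_intros)
  have "(\<integral>\<^sup>+z. g (plane_rotation a b z) \<partial>lborel) = (\<integral>\<^sup>+z. g2 (fst z + t * snd z, snd z) \<partial>lborel)"
    unfolding plane_rotation_eq_shears[OF ab t_def] Let_def g1_def g2_def by simp
  also have "\<dots> = (\<integral>\<^sup>+z. g2 z \<partial>lborel)" by (rule nn_integral_lborel_shear_fst) simp
  also have "\<dots> = (\<integral>\<^sup>+z. g1 z \<partial>lborel)" unfolding g2_def by (rule nn_integral_lborel_shear_snd) simp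
  also have "\<dots> = (\<integral>\<^sup>+z. g z \<partial>lborel)" unfolding g1_def by (rule nn_integral_lborel_shear_fst) simp
  finally show ?thesis .
qed

lemma distr_lborel_plane_rotation:
  assumes ab: "a\<^sup>2 + b\<^sup>2 = 1" "a \<noteq> -1"
  shows "distr lborel borel (plane_rotation a b) = lborel"
proof (rule measure_eqI)
  fix A assume "A \<in> sets (distr lborel borel (plane_rotation a b))"
  then have [measurable]: "A \<in> sets borel" by simp
  have "emeasure (distr lborel borel (plane_rotation a b)) A
      = emeasure lborel (plane_rotation a b -` A \<inter> space lborel)"
    by (rule emeasure_distr) auto
  also have "\<dots> = (\<integral>\<^sup>+z. indicator A (plane_rotation a b z) \<partial>lborel)"
    by (subst nn_integral_indicator[symmetric])
       (auto simp: indicator_def intro!: nn_integral_cong measurable_sets_borel[OF plane_rotation_measurable])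
  also have "\<dots> = emeasure lborel A"
    by (subst nn_integral_plane_rotation[OF _ ab]) simp_all
  finally show "emeasure (distr lborel borel (plane_rotation a b)) A = emeasure lborel A" .
qed simp

lemma integral_plane_rotation:
  fixes Q :: "real \<times> real \<Rightarrow> 'a::{banach, second_countable_topology}"
  assumes [measurable]: "Q \<in> borel_measurable borel" and ab: "a\<^sup>2 + b\<^sup>2 = 1" "a \<noteq> -1"
  shows "(\<integral>z. Q (plane_rotation a b z) \<partial>lborel) = (\<integral>z. Q z \<partial>lborel)"
  using integral_distr[of "plane_rotation a b" lborel borel Q] distr_lborel_plane_rotation[OF ab]
  by simp

section \<open>Mean values over discs of entire functions of the conjugate coordinate\<close>

text \<open>The point (x, omega) of the plane as the complex number x - i omega; the Gaussian STFT
  is an entire function of this coordinate up to a Gaussian factor and a phase.\<close>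

definition cnj_coord :: "real \<times> real \<Rightarrow> complex" where
  "cnj_coord z = Complex (fst z) (- snd z)"

lemma continuous_on_cnj_coord [continuous_intros]:
  "continuous_on S f \<Longrightarrow> continuous_on S (\<lambda>x. cnj_coord (f x))"
  unfolding cnj_coord_def by (intro continuous_intros)

lemma norm_cnj_coord [simp]: "cmod (cnj_coord z) = norm z"
  by (cases z) (simp add: cnj_coord_def cmod_def norm_Pair)

lemma measure_cball_plane: "s \<ge> 0 \<Longrightarrow> measure lborel (cball (c :: real \<times> real) s) = pi * s\<^sup>2"
  by (simp add: measure_def emeasure_cball unit_ball_vol_2 power2_eq_square)

lemma integrable_indicator_cball_continuous:
  fixes f :: "'a::euclidean_space \<Rightarrow> 'b::{banach, second_countable_topology}"
  assumes "continuous_on UNIV f"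
  shows "integrable lborel (\<lambda>z. indicator (cball c s) z *\<^sub>R f z)"
  by (rule borel_integrable_compact) (auto intro: continuous_on_subset[OF assms])

text \<open>Rotating by the angle pi/(2n) multiplies the integrand by -i, hence the integral vanishes.\<close>

lemma integral_cball_cnj_coord_power:
  assumes n: "n \<ge> 1"
  shows "(\<integral>z. indicator (cball 0 s) z *\<^sub>R cnj_coord z ^ n \<partial>lborel) = 0"
proof -
  define \<theta> where "\<theta> = pi / (2 * real n)"
  define a where "a = cos \<theta>"
  define b where "b = sin \<theta>"
  define u where "u = Complex a (- b)"
  define Q where "Q z = indicator (cball 0 s) z *\<^sub>R cnj_coord z ^ n" for z
  have ab: "a\<^sup>2 + b\<^sup>2 = 1" unfolding a_def b_def by simp
  have "0 < \<theta>" "\<theta> \<le> pi / 2" unfolding \<theta>_def using n by (auto simp: field_simps)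
  then have "a \<noteq> -1" unfolding a_def using cos_ge_zero[of \<theta>] by auto
  have [measurable]: "Q \<in> borel_measurable borel" unfolding Q_def
    by (intro borel_measurable_scaleR borel_measurable_indicator borel_measurable_power
        borel_measurable_continuous_onI continuous_intros) simp
  have "cnj_coord (plane_rotation a b z) = u * cnj_coord z" for z
    by (simp add: cnj_coord_def plane_rotation_def u_def complex_eq_iff algebra_simps)
  then have Q_rot: "Q (plane_rotation a b z) = u ^ n * Q z" for z
    unfolding Q_def using norm_plane_rotation[OF ab, of z]
    by (simp add: power_mult_distrib indicator_def)
  have "u = cis (- \<theta>)" by (simp add: u_def a_def b_def complex_eq_iff)
  then have "u ^ n = cis (- \<theta>) ^ n" by simp
  also have "\<dots> = cis (real n * (- \<theta>))" by (rule Complex.DeMoivre)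
  also have "real n * (- \<theta>) = - pi / 2" unfolding \<theta>_def using n by (simp add: field_simps)
  finally have "u ^ n \<noteq> 1" by (simp add: complex_eq_iff)
  have "(\<integral>z. Q z \<partial>lborel) = (\<integral>z. Q (plane_rotation a b z) \<partial>lborel)"
    by (rule integral_plane_rotation[symmetric]) (simp_all add: ab \<open>a \<noteq> -1\<close>)
  also have "\<dots> = u ^ n * (\<integral>z. Q z \<partial>lborel)" by (simp add: Q_rot)
  finally have "(1 - u ^ n) * (\<integral>z. Q z \<partial>lborel) = 0" by (simp add: algebra_simps)
  then show ?thesis using \<open>u ^ n \<noteq> 1\<close> unfolding Q_def by simp
qed

lemma integral_cball_power_quadratic:
  fixes \<alpha> \<beta> :: complex
  assumes k: "k \<ge> 1"
  shows "(\<integral>z. indicator (cball 0 s) z *\<^sub>R (\<alpha> * cnj_coord z ^ 2 + \<beta> * cnj_coord z) ^ k \<partial>lborel) = 0"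
proof -
  define c where "c j = of_nat (k choose j) * \<alpha> ^ j * \<beta> ^ (k - j)" for j
  define P where "P j z = indicator (cball 0 s) z *\<^sub>R cnj_coord z ^ (j + k)" for j z
  have expand: "indicator (cball 0 s) z *\<^sub>R (\<alpha> * cnj_coord z ^ 2 + \<beta> * cnj_coord z) ^ k
      = (\<Sum>j\<le>k. c j * P j z)" for z
  proof -
    have "(\<alpha> * cnj_coord z ^ 2 + \<beta> * cnj_coord z) ^ k = (cnj_coord z * (\<alpha> * cnj_coord z + \<beta>)) ^ k"
      by (simp add: power2_eq_square algebra_simps)
    also have "\<dots> = (\<Sum>j\<le>k. c j * cnj_coord z ^ (j + k))"
      by (simp add: c_def power_mult_distrib binomial_ring sum_distrib_left power_add mult_ac)
    finally show ?thesis
      by (simp add: P_def scaleR_sum_right)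
  qed
  have "(\<integral>z. (\<Sum>j\<le>k. c j * P j z) \<partial>lborel) = (\<Sum>j\<le>k. (\<integral>z. c j * P j z \<partial>lborel))"
    by (rule Bochner_Integration.integral_sum)
       (unfold P_def, intro integrable_mult_right integrable_indicator_cball_continuous continuous_intros)
  also have "\<dots> = (\<Sum>j\<le>k. c j * (\<integral>z. P j z \<partial>lborel))"
    by (simp only: integral_mult_right_zero)
  also have "\<dots> = 0"
    using k by (simp add: P_def integral_cball_cnj_coord_power)
  finally show ?thesis unfolding expand .
qed

lemma integral_indicator_exp_eq_suminf:
  fixes q :: "'a::euclidean_space \<Rightarrow> complex"
  assumes S: "S \<in> sets borel" "emeasure lborel S < \<infinity>" and [measurable]: "q \<in> borel_measurable borel"
    and q_bound: "\<And>z. z \<in> S \<Longrightarrow> cmod (q z) \<le> B"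
  shows "(\<integral>z. indicator S z *\<^sub>R exp (q z) \<partial>lborel)
    = (\<Sum>k. (\<integral>z. indicator S z *\<^sub>R (q z ^ k /\<^sub>R fact k) \<partial>lborel))"
proof -
  define f where "f k z = indicator S z *\<^sub>R (q z ^ k /\<^sub>R fact k)" for k z
  have [measurable]: "S \<in> sets borel" by (fact S(1))
  have int_S: "integrable lborel (\<lambda>z. indicator S z * c)" for c :: real
    using S by (intro integrable_mult_left integrable_real_indicator) auto
  have f_bound: "norm (f k z) \<le> indicator S z * (B ^ k / fact k)" for k z
  proof (cases "z \<in> S")
    case True
    then have "norm (f k z) = cmod (q z) ^ k / fact k"
      by (simp add: f_def norm_power field_simps)
    also have "\<dots> \<le> B ^ k / fact k"
      using True by (intro divide_right_mono power_mono q_bound) auto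
    finally show ?thesis using True by simp
  qed (simp add: f_def)
  have f_int: "integrable lborel (f k)" for k
  proof (rule Bochner_Integration.integrable_bound[OF int_S[of "B ^ k / fact k"]])
    show "f k \<in> borel_measurable lborel" unfolding f_def by measurable
    show "AE z in lborel. norm (f k z) \<le> norm (indicator S z * (B ^ k / fact k))"
      by (intro AE_I2 order_trans[OF f_bound]) (simp add: divide_right_mono)
  qed
  have "(\<integral>z. norm (f k z) \<partial>lborel) \<le> measure lborel S * (B ^ k / fact k)" for k
  proof -
    have "(\<integral>z. norm (f k z) \<partial>lborel) \<le> (\<integral>z. indicator S z * (B ^ k / fact k) \<partial>lborel)"
      by (intro integral_mono integrable_norm f_int f_bound int_S)
    then show ?thesis using S by simp
  qed
  then have summable_int: "summable (\<lambda>k. (\<integral>z. norm (f k z) \<partial>lborel))"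
    by (intro summable_comparison_test[OF _ summable_mult[OF summable_exp_generic[of B], of "measure lborel S"]])
       (auto simp: divide_inverse mult_ac)
  have summable_norm: "summable (\<lambda>k. norm (f k z))" for z
    by (rule summable_comparison_test[OF _ summable_mult[OF summable_exp_generic[of B], of "indicator S z"]])
       (use f_bound in \<open>auto simp: divide_inverse mult_ac\<close>)
  have "(\<integral>z. indicator S z *\<^sub>R exp (q z) \<partial>lborel) = (\<integral>z. (\<Sum>k. f k z) \<partial>lborel)"
    by (intro Bochner_Integration.integral_cong) (auto simp: f_def exp_def indicator_def)
  also have "\<dots> = (\<Sum>k. (\<integral>z. f k z \<partial>lborel))"
    by (rule integral_suminf[OF f_int _ summable_int]) (simp add: summable_norm)
  finally show ?thesis unfolding f_def .
qed

text \<open>Mean value property: all terms of the exponential series but the constant one vanish.\<close>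

lemma integral_cball_exp_quadratic:
  fixes \<alpha> \<beta> :: complex
  assumes s: "s \<ge> 0"
  shows "(\<integral>z. indicator (cball 0 s) z *\<^sub>R exp (\<alpha> * cnj_coord z ^ 2 + \<beta> * cnj_coord z) \<partial>lborel)
    = complex_of_real (pi * s\<^sup>2)"
proof -
  define q where "q z = \<alpha> * cnj_coord z ^ 2 + \<beta> * cnj_coord z" for z
  have q_bound: "cmod (q z) \<le> cmod \<alpha> * s\<^sup>2 + cmod \<beta> * s" if "z \<in> cball 0 s" for z
  proof -
    have "norm z \<le> s" using that by simp
    then have "cmod \<alpha> * (norm z)\<^sup>2 + cmod \<beta> * norm z \<le> cmod \<alpha> * s\<^sup>2 + cmod \<beta> * s"
      by (intro add_mono mult_left_mono power_mono) auto
    then show ?thesis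
      using norm_triangle_ineq[of "\<alpha> * cnj_coord z ^ 2" "\<beta> * cnj_coord z"]
      by (simp add: q_def norm_mult norm_power)
  qed
  have "q \<in> borel_measurable borel"
    unfolding q_def by (intro borel_measurable_continuous_onI continuous_intros)
  then have "(\<integral>z. indicator (cball 0 s) z *\<^sub>R exp (q z) \<partial>lborel)
      = (\<Sum>k. (\<integral>z. indicator (cball 0 s) z *\<^sub>R (q z ^ k /\<^sub>R fact k) \<partial>lborel))"
    using q_bound by (intro integral_indicator_exp_eq_suminf emeasure_bounded_finite) auto
  also have "(\<lambda>k. (\<integral>z. indicator (cball 0 s) z *\<^sub>R (q z ^ k /\<^sub>R fact k) \<partial>lborel))
      = (\<lambda>k. if k = 0 then complex_of_real (pi * s\<^sup>2) else 0)"
  proof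
    fix k :: nat
    show "(\<integral>z. indicator (cball 0 s) z *\<^sub>R (q z ^ k /\<^sub>R fact k) \<partial>lborel)
        = (if k = 0 then complex_of_real (pi * s\<^sup>2) else 0)"
    proof (cases "k = 0")
      case True
      have "emeasure lborel (cball (0 :: real \<times> real) s) < \<infinity>" by (rule emeasure_bounded_finite) simp
      with True s show ?thesis by (simp add: measure_cball_plane scaleR_conv_of_real)
    next
      case False
      have "(\<integral>z. indicator (cball 0 s) z *\<^sub>R (q z ^ k /\<^sub>R fact k) \<partial>lborel)
          = (\<integral>z. indicator (cball 0 s) z *\<^sub>R q z ^ k \<partial>lborel) / fact k"
        by (simp add: divide_inverse scaleR_conv_of_real mult_ac)
      also have "\<dots> = 0"
        unfolding q_def using False by (simp add: integral_cball_power_quadratic)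
      finally show ?thesis using False by simp
    qed
  qed
  also have "(\<Sum>k. if k = 0 then complex_of_real (pi * s\<^sup>2) else 0) = complex_of_real (pi * s\<^sup>2)"
    using sums_unique[OF sums_single[of 0 "\<lambda>_. complex_of_real (pi * s\<^sup>2)"]] by simp
  finally show ?thesis unfolding q_def .
qed

section \<open>The STFT near a point\<close>

definition stft_integrand :: "(real \<Rightarrow> complex) \<Rightarrow> real \<Rightarrow> real \<Rightarrow> real \<Rightarrow> complex" where
  "stft_integrand h x \<omega> t = h t * cnj (complex_of_real (gwin (t - x))) *
      exp (- 2 * complex_of_real pi * \<i> * complex_of_real \<omega> * complex_of_real t)"

definition shift_kernel :: "real \<Rightarrow> real \<Rightarrow> real \<times> real \<Rightarrow> complex" where
  "shift_kernel x t w =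
     exp (complex_of_real (- pi / 2) * cnj_coord w ^ 2 + complex_of_real (2 * pi * (t - x)) * cnj_coord w)"

definition shift_phase :: "real \<Rightarrow> real \<times> real \<Rightarrow> complex" where
  "shift_phase x w = exp (\<i> * complex_of_real (- 2 * pi * snd w * x - pi * fst w * snd w))"

lemma stft_eq_integral_integrand: "stft h (x, \<omega>) = (\<integral>t. stft_integrand h x \<omega> t \<partial>lborel)"
  unfolding stft_def stft_integrand_def by simp

lemma norm_shift_phase [simp]: "cmod (shift_phase x w) = 1"
  by (simp add: shift_phase_def)

lemma norm_stft_integrand:
  "cmod (stft_integrand h x \<omega> t) = cmod (h t) * 2 powr (1/4) * exp (- pi * (t - x)\<^sup>2)"
  by (simp add: stft_integrand_def gwin_def norm_mult)

text \<open>Completing the square in the exponent.\<close>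

lemma stft_integrand_shift:
  "stft_integrand h (x + a) (\<omega> + b) t
   = shift_phase x (a, b) * complex_of_real (exp (- pi * (a\<^sup>2 + b\<^sup>2) / 2)) *
     (stft_integrand h x \<omega> t * shift_kernel x t (a, b))"
proof -
  define C where "C = complex_of_real (2 powr (1/4))"
  have gwin: "cnj (complex_of_real (gwin u)) = C * exp (complex_of_real (- pi * u\<^sup>2))" for u
    unfolding gwin_def C_def exp_of_real by simp
  define A1 where "A1 = complex_of_real (- pi * (t - (x + a))\<^sup>2)"
  define A2 where "A2 = - 2 * complex_of_real pi * \<i> * complex_of_real (\<omega> + b) * complex_of_real t"
  define B1 where "B1 = \<i> * complex_of_real (- 2 * pi * b * x - pi * a * b)"
  define B2 where "B2 = complex_of_real (- pi * (a\<^sup>2 + b\<^sup>2) / 2)"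
  define B3 where "B3 = complex_of_real (- pi * (t - x)\<^sup>2)"
  define B4 where "B4 = - 2 * complex_of_real pi * \<i> * complex_of_real \<omega> * complex_of_real t"
  define B5 where "B5 = complex_of_real (- pi / 2) * cnj_coord (a, b) ^ 2
    + complex_of_real (2 * pi * (t - x)) * cnj_coord (a, b)"
  have lhs: "stft_integrand h (x + a) (\<omega> + b) t = h t * C * exp (A1 + A2)"
    unfolding stft_integrand_def gwin A1_def[symmetric] A2_def[symmetric] exp_add by (simp only: mult_ac)
  have "complex_of_real (exp (- pi * (a\<^sup>2 + b\<^sup>2) / 2)) = exp B2"
    unfolding B2_def by (simp only: exp_of_real)
  moreover have "stft_integrand h x \<omega> t = h t * C * exp (B3 + B4)"
    unfolding stft_integrand_def gwin B3_def[symmetric] B4_def[symmetric] exp_add by (simp only: mult_ac)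
  moreover have "shift_phase x (a, b) = exp B1" "shift_kernel x t (a, b) = exp B5"
    unfolding shift_phase_def B1_def shift_kernel_def B5_def by simp_all
  ultimately have rhs: "shift_phase x (a, b) * complex_of_real (exp (- pi * (a\<^sup>2 + b\<^sup>2) / 2)) *
      (stft_integrand h x \<omega> t * shift_kernel x t (a, b)) = h t * C * exp (B1 + B2 + (B3 + B4) + B5)"
    unfolding exp_add by (simp only: mult_ac)
  have "A1 + A2 = B1 + B2 + (B3 + B4) + B5"
    unfolding A1_def A2_def B1_def B2_def B3_def B4_def B5_def
    by (simp add: complex_eq_iff cnj_coord_def power2_eq_square algebra_simps) (simp add: field_simps)
  then show ?thesis unfolding lhs rhs by simp
qed

lemma stft_shift:
  "stft h (x + a, \<omega> + b) = shift_phase x (a, b) * complex_of_real (exp (- pi * (a\<^sup>2 + b\<^sup>2) / 2)) *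
      (\<integral>t. stft_integrand h x \<omega> t * shift_kernel x t (a, b) \<partial>lborel)"
  unfolding stft_eq_integral_integrand stft_integrand_shift by (rule integral_mult_right_zero)

lemma stft_integrand_measurable [measurable]:
  assumes [measurable]: "h \<in> borel_measurable lborel"
  shows "stft_integrand h x \<omega> \<in> borel_measurable lborel"
proof -
  have "(\<lambda>t. cnj (complex_of_real (gwin (t - x))) *
      exp (- 2 * complex_of_real pi * \<i> * complex_of_real \<omega> * complex_of_real t)) \<in> borel_measurable borel"
    by (rule borel_measurable_continuous_onI) (simp add: gwin_def, intro continuous_intros)
  then show ?thesis
    unfolding stft_integrand_def by (simp add: mult.assoc)
qed

lemma integrable_stft_integrand:
  assumes h: "integrable lborel h"
  shows "integrable lborel (stft_integrand h x \<omega>)"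
proof (rule Bochner_Integration.integrable_bound)
  show "integrable lborel (\<lambda>t. 2 powr (1/4) * cmod (h t))" using h by auto
  show "stft_integrand h x \<omega> \<in> borel_measurable lborel" using h by measurable
  have "cmod (h t) * 2 powr (1/4) * exp (- pi * (t - x)\<^sup>2) \<le> cmod (h t) * 2 powr (1/4) * 1" for t
    by (intro mult_left_mono) auto
  then show "AE t in lborel. norm (stft_integrand h x \<omega> t) \<le> norm (2 powr (1/4) * cmod (h t))"
    by (intro AE_I2) (simp add: norm_stft_integrand mult.commute)
qed

lemma stft_diff:
  assumes "integrable lborel f" and "integrable lborel g"
  shows "stft (\<lambda>t. f t - g t) z = stft f z - stft g z"
proof -
  obtain x \<omega> where z: "z = (x, \<omega>)" by (cases z)
  have "stft_integrand (\<lambda>t. f t - g t) x \<omega> = (\<lambda>t. stft_integrand f x \<omega> t - stft_integrand g x \<omega> t)"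
    unfolding stft_integrand_def by (simp add: fun_eq_iff algebra_simps)
  then show ?thesis
    unfolding z stft_eq_integral_integrand
    using integrable_stft_integrand[OF assms(1)] integrable_stft_integrand[OF assms(2)] by simp
qed

lemma norm_shift_kernel_le:
  assumes "norm w \<le> s"
  shows "cmod (shift_kernel x t w) \<le> exp (pi * s\<^sup>2 / 2 + 2 * pi * \<bar>t - x\<bar> * s)"
proof -
  let ?q = "complex_of_real (- pi / 2) * cnj_coord w ^ 2 + complex_of_real (2 * pi * (t - x)) * cnj_coord w"
  have "cmod (shift_kernel x t w) = exp (Re ?q)" by (simp add: shift_kernel_def)
  also have "Re ?q \<le> cmod ?q" by (rule complex_Re_le_cmod)
  also have "cmod ?q \<le> pi / 2 * (norm w)\<^sup>2 + 2 * pi * \<bar>t - x\<bar> * norm w"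
    using norm_triangle_ineq[of "complex_of_real (- pi / 2) * cnj_coord w ^ 2"
        "complex_of_real (2 * pi * (t - x)) * cnj_coord w"]
    by (simp add: norm_mult norm_power flip: of_real_diff)
  also have "\<dots> \<le> pi * s\<^sup>2 / 2 + 2 * pi * \<bar>t - x\<bar> * s"
    using assms power_mono[of "norm w" s 2] by (intro add_mono mult_left_mono) auto
  finally show ?thesis by simp
qed

lemma exp_neg_square_mult_le:
  "exp (- pi * p\<^sup>2) * exp (pi * s\<^sup>2 / 2 + 2 * pi * \<bar>p\<bar> * s) \<le> exp (3 * pi * s\<^sup>2 / 2)"
proof -
  have "- pi * p\<^sup>2 + (pi * s\<^sup>2 / 2 + 2 * pi * \<bar>p\<bar> * s) = 3 * pi * s\<^sup>2 / 2 - pi * (\<bar>p\<bar> - s)\<^sup>2"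
    by (simp add: power2_eq_square algebra_simps abs_mult_self_eq)
  also have "\<dots> \<le> 3 * pi * s\<^sup>2 / 2" by simp
  finally show ?thesis by (simp flip: exp_add)
qed

section \<open>Sub-mean value inequalities for the STFT\<close>

text \<open>The factor of V h (x + a, omega + b) that is entire in the conjugate coordinate of (a, b).\<close>

definition stft_profile :: "(real \<Rightarrow> complex) \<Rightarrow> real \<Rightarrow> real \<Rightarrow> real \<times> real \<Rightarrow> complex" where
  "stft_profile h x \<omega> w = (\<integral>t. stft_integrand h x \<omega> t * shift_kernel x t w \<partial>lborel)"

lemma norm_stft_shift:
  "cmod (stft h ((x, \<omega>) + w)) = exp (- pi * (norm w)\<^sup>2 / 2) * cmod (stft_profile h x \<omega> w)"
proof -
  obtain a b where w: "w = (a, b)" by (cases w)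
  then show ?thesis
    using stft_shift[of h x a \<omega> b] by (simp add: stft_profile_def norm_mult norm_Pair)
qed

lemma measurable_shift_integrand:
  assumes "h \<in> borel_measurable lborel"
  shows "(\<lambda>(w, t). stft_integrand h x \<omega> t * shift_kernel x t w) \<in> borel_measurable (lborel \<Otimes>\<^sub>M lborel)"
proof -
  have "(\<lambda>p::(real \<times> real) \<times> real. shift_kernel x (snd p) (fst p)) \<in> borel_measurable (lborel \<Otimes>\<^sub>M lborel)"
    by (intro borel_measurable_lborel_pair borel_measurable_continuous_onI)
       (simp add: shift_kernel_def, intro continuous_intros, auto)
  moreover have "(\<lambda>p::(real \<times> real) \<times> real. stft_integrand h x \<omega> (snd p)) \<in> borel_measurable (lborel \<Otimes>\<^sub>M lborel)"
    using assms by measurable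
  ultimately show ?thesis
    unfolding case_prod_beta by (rule borel_measurable_times[rotated])
qed

lemma stft_profile_measurable [measurable]:
  "h \<in> borel_measurable lborel \<Longrightarrow> stft_profile h x \<omega> \<in> borel_measurable lborel"
  unfolding stft_profile_def
  by (rule lborel.borel_measurable_lebesgue_integral[OF measurable_shift_integrand])

text \<open>The Gaussian decay of the integrand in t beats the growth of the kernel on a disc.\<close>

lemma integrable_shift_integrand_cball:
  assumes h: "integrable lborel h"
  shows "integrable (lborel \<Otimes>\<^sub>M lborel)
    (\<lambda>(w, t). indicator (cball 0 s) w *\<^sub>R (stft_integrand h x \<omega> t * shift_kernel x t w))"
    (is "integrable _ (case_prod ?G)")
proof (rule Bochner_Integration.integrable_bound)
  define S where "S = cball (0 :: real \<times> real) s"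
  define K where "K = 2 powr (1/4) * exp (3 * pi * s\<^sup>2 / 2)"
  have [measurable]: "h \<in> borel_measurable lborel" "S \<in> sets borel" using h by (auto simp: S_def)
  have "emeasure lborel S < \<infinity>" unfolding S_def by (intro emeasure_bounded_finite) simp
  then show "integrable (lborel \<Otimes>\<^sub>M lborel) (\<lambda>p. indicator S (fst p) * (K * cmod (h (snd p))))"
    using h by (intro integrable_lborel_pair_mult) (auto simp: S_def)
  have "(\<lambda>p. indicator S (fst p) :: real) \<in> borel_measurable (lborel \<Otimes>\<^sub>M lborel)" by measurable
  moreover have "(\<lambda>(w, t). stft_integrand h x \<omega> t * shift_kernel x t w) \<in> borel_measurable (lborel \<Otimes>\<^sub>M lborel)"
    by (rule measurable_shift_integrand) simp
  ultimately show "case_prod ?G \<in> borel_measurable (lborel \<Otimes>\<^sub>M lborel)"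
    unfolding S_def case_prod_beta by (rule borel_measurable_scaleR)
  have "norm (?G w t) \<le> indicator S w * (K * cmod (h t))" for w t
  proof (cases "w \<in> S")
    case True
    then have "norm w \<le> s" by (simp add: S_def)
    have "norm (?G w t) = cmod (h t) * 2 powr (1/4) * (exp (- pi * (t - x)\<^sup>2) * cmod (shift_kernel x t w))"
      using True by (simp add: S_def norm_mult norm_stft_integrand)
    also have "\<dots> \<le> cmod (h t) * 2 powr (1/4) *
        (exp (- pi * (t - x)\<^sup>2) * exp (pi * s\<^sup>2 / 2 + 2 * pi * \<bar>t - x\<bar> * s))"
      by (intro mult_left_mono norm_shift_kernel_le \<open>norm w \<le> s\<close>) auto
    also have "\<dots> \<le> cmod (h t) * 2 powr (1/4) * exp (3 * pi * s\<^sup>2 / 2)"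
      by (intro mult_left_mono exp_neg_square_mult_le) auto
    finally show ?thesis using True by (simp add: K_def mult_ac)
  qed (simp add: S_def)
  then show "AE p in lborel \<Otimes>\<^sub>M lborel. norm (case_prod ?G p) \<le> norm (indicator S (fst p) * (K * cmod (h (snd p))))"
    by (intro AE_I2) (simp add: case_prod_beta abs_mult K_def S_def)
qed

lemma integrable_cball_stft_profile:
  "integrable lborel h \<Longrightarrow> integrable lborel (\<lambda>w. indicator (cball 0 s) w *\<^sub>R stft_profile h x \<omega> w)"
  using lborel_pair.integrable_fst[OF integrable_shift_integrand_cball, of h s x \<omega>]
  by (simp add: stft_profile_def)

lemma integral_cball_stft_profile:
  assumes h: "integrable lborel h" and s: "s \<ge> 0"
  shows "(\<integral>w. indicator (cball 0 s) w *\<^sub>R stft_profile h x \<omega> w \<partial>lborel)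
    = complex_of_real (pi * s\<^sup>2) * stft h (x, \<omega>)"
proof -
  define G where "G w t = indicator (cball 0 s) w *\<^sub>R (stft_integrand h x \<omega> t * shift_kernel x t w)" for w t
  have inner_w: "(\<integral>w. G w t \<partial>lborel) = stft_integrand h x \<omega> t * complex_of_real (pi * s\<^sup>2)" for t
  proof -
    have "(\<integral>w. G w t \<partial>lborel)
        = stft_integrand h x \<omega> t * (\<integral>w. indicator (cball 0 s) w *\<^sub>R shift_kernel x t w \<partial>lborel)"
      unfolding G_def by (simp add: scaleR_conv_of_real mult_ac flip: integral_mult_right_zero)
    then show ?thesis
      unfolding shift_kernel_def integral_cball_exp_quadratic[OF s] .
  qed
  have "(\<integral>w. indicator (cball 0 s) w *\<^sub>R stft_profile h x \<omega> w \<partial>lborel) = (\<integral>w. (\<integral>t. G w t \<partial>lborel) \<partial>lborel)"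
    unfolding G_def stft_profile_def by simp
  also have "\<dots> = (\<integral>t. (\<integral>w. G w t \<partial>lborel) \<partial>lborel)"
    using lborel_pair.Fubini_integral[OF integrable_shift_integrand_cball[OF h]]
    unfolding G_def by simp
  also have "\<dots> = complex_of_real (pi * s\<^sup>2) * stft h (x, \<omega>)"
    unfolding inner_w stft_eq_integral_integrand by (simp add: mult.commute)
  finally show ?thesis .
qed

lemma stft_disc_submean:
  assumes h: "integrable lborel h" and s: "s \<ge> 0"
  shows "ennreal (pi * s\<^sup>2 * cmod (stft h (x, \<omega>)))
     \<le> (\<integral>\<^sup>+w. indicator (cball 0 s) w * ennreal (cmod (stft_profile h x \<omega> w)) \<partial>lborel)"
proof -
  have "ennreal (pi * s\<^sup>2 * cmod (stft h (x, \<omega>)))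
      = ennreal (norm (\<integral>w. indicator (cball 0 s) w *\<^sub>R stft_profile h x \<omega> w \<partial>lborel))"
    using s by (simp add: integral_cball_stft_profile[OF h s] norm_mult norm_power)
  also have "\<dots> \<le> (\<integral>\<^sup>+w. ennreal (norm (indicator (cball 0 s) w *\<^sub>R stft_profile h x \<omega> w)) \<partial>lborel)"
    by (rule integral_norm_bound_ennreal[OF integrable_cball_stft_profile[OF h]])
  also have "\<dots> = (\<integral>\<^sup>+w. indicator (cball 0 s) w * ennreal (cmod (stft_profile h x \<omega> w)) \<partial>lborel)"
    by (intro nn_integral_cong) (simp add: indicator_def)
  finally show ?thesis .
qed

text \<open>The derivative of -e^(-pi s^2/2).\<close>

definition gauss_radial_density :: "real \<Rightarrow> real" where
  "gauss_radial_density s = pi * s * exp (- pi * s\<^sup>2 / 2)"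

lemma gauss_radial_density_nonneg: "s \<ge> 0 \<Longrightarrow> gauss_radial_density s \<ge> 0"
  by (simp add: gauss_radial_density_def)

lemma gauss_radial_density_measurable [measurable]: "gauss_radial_density \<in> borel_measurable borel"
  unfolding gauss_radial_density_def
  by (rule borel_measurable_continuous_onI) (intro continuous_intros, auto)

lemma nn_integral_gauss_radial_density:
  assumes "0 \<le> a" "a \<le> b"
  shows "(\<integral>\<^sup>+s. ennreal (gauss_radial_density s) * indicator {a..b} s \<partial>lborel)
    = ennreal (exp (- pi * a\<^sup>2 / 2) - exp (- pi * b\<^sup>2 / 2))"
proof -
  have "(\<integral>\<^sup>+s\<in>{a..b}. ennreal (gauss_radial_density s) \<partial>lborel)
      = ennreal ((- exp (- pi * b\<^sup>2 / 2)) - (- exp (- pi * a\<^sup>2 / 2)))"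
    using assms
    by (intro nn_integral_FTC_Icc)
       (auto intro!: derivative_eq_intros gauss_radial_density_nonneg
         simp: gauss_radial_density_def power2_eq_square)
  then show ?thesis by (simp add: mult.commute)
qed

lemma nn_integral_gauss_radial_density_area:
  assumes "0 \<le> r"
  shows "(\<integral>\<^sup>+s. ennreal (gauss_radial_density s * (pi * s\<^sup>2)) * indicator {0..r} s \<partial>lborel)
    = ennreal (2 - (2 + pi * r\<^sup>2) * exp (- pi * r\<^sup>2 / 2))"
proof -
  have "(\<integral>\<^sup>+s\<in>{0..r}. ennreal (gauss_radial_density s * (pi * s\<^sup>2)) \<partial>lborel)
      = ennreal ((- (2 + pi * r\<^sup>2) * exp (- pi * r\<^sup>2 / 2)) - (- (2 + pi * 0\<^sup>2) * exp (- pi * 0\<^sup>2 / 2)))"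
    using assms
    by (intro nn_integral_FTC_Icc)
       (auto intro!: derivative_eq_intros mult_nonneg_nonneg gauss_radial_density_nonneg
         simp: gauss_radial_density_def power2_eq_square algebra_simps)
  also have "(- (2 + pi * r\<^sup>2) * exp (- pi * r\<^sup>2 / 2)) - (- (2 + pi * 0\<^sup>2) * exp (- pi * 0\<^sup>2 / 2))
      = 2 - (2 + pi * r\<^sup>2) * exp (- pi * r\<^sup>2 / 2)"
    by (simp add: algebra_simps)
  finally show ?thesis by (simp add: mult.commute)
qed

lemma ennreal_gauss_weight_layers:
  "indicator (cball 0 r) w * ennreal (exp (- pi * (norm w)\<^sup>2 / 2))
    = indicator (cball 0 r) w * ennreal (exp (- pi * r\<^sup>2 / 2))
      + (\<integral>\<^sup>+s. ennreal (gauss_radial_density s) * indicator {norm w..r} s \<partial>lborel)"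
proof (cases "norm w \<le> r")
  case True
  have "exp (- pi * r\<^sup>2 / 2) \<le> exp (- pi * (norm w)\<^sup>2 / 2)"
    using True power_mono[of "norm w" r 2] by simp
  with True show ?thesis
    by (simp add: nn_integral_gauss_radial_density flip: ennreal_plus)
qed simp

text \<open>Layer-cake decomposition of the Gaussian weight on a disc into indicators of smaller discs.\<close>

lemma nn_integral_cball_gauss_layers:
  fixes g :: "real \<times> real \<Rightarrow> ennreal"
  assumes [measurable]: "g \<in> borel_measurable borel"
  shows "(\<integral>\<^sup>+w. indicator (cball 0 r) w * ennreal (exp (- pi * (norm w)\<^sup>2 / 2)) * g w \<partial>lborel)
    = ennreal (exp (- pi * r\<^sup>2 / 2)) * (\<integral>\<^sup>+w. indicator (cball 0 r) w * g w \<partial>lborel)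
      + (\<integral>\<^sup>+s. ennreal (gauss_radial_density s) * indicator {0..r} s *
           (\<integral>\<^sup>+w. indicator (cball 0 s) w * g w \<partial>lborel) \<partial>lborel)"
proof -
  have [measurable]: "g \<in> borel_measurable lborel" by simp
  define A where "A = {p :: (real \<times> real) \<times> real. norm (fst p) \<le> snd p \<and> snd p \<le> r}"
  have "closed A" unfolding A_def by (intro closed_Collect_conj closed_Collect_le continuous_intros)
  then have [measurable]: "A \<in> sets borel" by simp
  define L where "L w = (\<integral>\<^sup>+s. indicator A (w, s) * ennreal (gauss_radial_density s) * g w \<partial>lborel)" for w
  have L_measurable: "L \<in> borel_measurable lborel"
    unfolding L_def
    by (rule lborel.borel_measurable_nn_integral_fst[of "\<lambda>p. indicator A p * ennreal (gauss_radial_density (snd p)) * g (fst p)", simplified])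
       (rule borel_measurable_lborel_pair, measurable)
  have layers: "indicator (cball 0 r) w * ennreal (exp (- pi * (norm w)\<^sup>2 / 2)) * g w
      = ennreal (exp (- pi * r\<^sup>2 / 2)) * (indicator (cball 0 r) w * g w) + L w" for w
  proof -
    have "L w = (\<integral>\<^sup>+s. ennreal (gauss_radial_density s) * indicator {norm w..r} s \<partial>lborel) * g w"
      unfolding L_def
      by (subst nn_integral_multc[symmetric]) (auto intro!: nn_integral_cong simp: A_def indicator_def)
    then show ?thesis
      unfolding ennreal_gauss_weight_layers by (simp add: distrib_left mult_ac)
  qed
  have "(\<integral>\<^sup>+w. L w \<partial>lborel)
      = (\<integral>\<^sup>+s. (\<integral>\<^sup>+w. indicator A (w, s) * ennreal (gauss_radial_density s) * g w \<partial>lborel) \<partial>lborel)"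
    unfolding L_def
    by (rule lborel_pair.Fubini'[symmetric])
       (rule borel_measurable_lborel_pair, simp add: case_prod_beta', measurable)
  also have "\<dots> = (\<integral>\<^sup>+s. ennreal (gauss_radial_density s) * indicator {0..r} s *
           (\<integral>\<^sup>+w. indicator (cball 0 s) w * g w \<partial>lborel) \<partial>lborel)"
  proof (rule nn_integral_cong)
    fix s :: real
    have "(\<integral>\<^sup>+w. indicator A (w, s) * ennreal (gauss_radial_density s) * g w \<partial>lborel)
        = (\<integral>\<^sup>+w. (ennreal (gauss_radial_density s) * indicator {0..r} s) * (indicator (cball 0 s) w * g w) \<partial>lborel)"
      by (intro nn_integral_cong) (auto simp: A_def indicator_def intro: order_trans[OF norm_ge_zero])
    also have "\<dots> = ennreal (gauss_radial_density s) * indicator {0..r} s *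
        (\<integral>\<^sup>+w. indicator (cball 0 s) w * g w \<partial>lborel)"
      by (rule nn_integral_cmult) measurable
    finally show "(\<integral>\<^sup>+w. indicator A (w, s) * ennreal (gauss_radial_density s) * g w \<partial>lborel)
        = ennreal (gauss_radial_density s) * indicator {0..r} s * (\<integral>\<^sup>+w. indicator (cball 0 s) w * g w \<partial>lborel)" .
  qed
  finally show ?thesis
    unfolding layers using L_measurable by (simp add: nn_integral_add nn_integral_cmult)
qed

lemma gauss_weighted_submean:
  fixes g :: "real \<times> real \<Rightarrow> ennreal"
  assumes [measurable]: "g \<in> borel_measurable borel" and r: "r \<ge> 0" and c: "c \<ge> 0"
    and submean: "\<And>s. 0 \<le> s \<Longrightarrow> s \<le> r \<Longrightarrow> ennreal (pi * s\<^sup>2 * c) \<le> (\<integral>\<^sup>+w. indicator (cball 0 s) w * g w \<partial>lborel)"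
  shows "ennreal (2 * (1 - exp (- pi * r\<^sup>2 / 2)) * c)
    \<le> (\<integral>\<^sup>+w. indicator (cball 0 r) w * ennreal (exp (- pi * (norm w)\<^sup>2 / 2)) * g w \<partial>lborel)"
proof -
  define er where "er = exp (- pi * r\<^sup>2 / 2)"
  have "1 + pi * r\<^sup>2 / 2 \<le> exp (pi * r\<^sup>2 / 2)" by (rule exp_ge_add_one_self)
  then have "(1 + pi * r\<^sup>2 / 2) * er \<le> 1"
    unfolding er_def by (simp add: exp_minus field_simps)
  then have area_nonneg: "0 \<le> 2 - (2 + pi * r\<^sup>2) * er" by (simp add: algebra_simps)
  have "2 * (1 - er) * c = er * (pi * r\<^sup>2 * c) + (2 - (2 + pi * r\<^sup>2) * er) * c"
    by (simp add: algebra_simps)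
  then have "ennreal (2 * (1 - er) * c)
      = ennreal er * ennreal (pi * r\<^sup>2 * c) + ennreal (2 - (2 + pi * r\<^sup>2) * er) * ennreal c"
    using area_nonneg c r unfolding er_def
    by (simp add: ennreal_plus[symmetric] ennreal_mult'[symmetric] del: ennreal_plus)
  also have "\<dots> = ennreal er * ennreal (pi * r\<^sup>2 * c)
      + (\<integral>\<^sup>+s. ennreal (gauss_radial_density s * (pi * s\<^sup>2)) * indicator {0..r} s \<partial>lborel) * ennreal c"
    unfolding nn_integral_gauss_radial_density_area[OF r] er_def ..
  also have "\<dots> \<le> ennreal er * (\<integral>\<^sup>+w. indicator (cball 0 r) w * g w \<partial>lborel)
      + (\<integral>\<^sup>+s. ennreal (gauss_radial_density s) * indicator {0..r} s *
           (\<integral>\<^sup>+w. indicator (cball 0 s) w * g w \<partial>lborel) \<partial>lborel)"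
  proof (intro add_mono mult_left_mono submean r order.refl)
    have "(\<integral>\<^sup>+s. ennreal (gauss_radial_density s * (pi * s\<^sup>2)) * indicator {0..r} s \<partial>lborel) * ennreal c
        = (\<integral>\<^sup>+s. ennreal (gauss_radial_density s) * indicator {0..r} s * ennreal (pi * s\<^sup>2 * c) \<partial>lborel)"
      by (subst nn_integral_multc[symmetric])
         (auto intro!: nn_integral_cong simp: indicator_def ennreal_mult'[symmetric] gauss_radial_density_nonneg mult_ac c)
    also have "\<dots> \<le> (\<integral>\<^sup>+s. ennreal (gauss_radial_density s) * indicator {0..r} s *
           (\<integral>\<^sup>+w. indicator (cball 0 s) w * g w \<partial>lborel) \<partial>lborel)"
    proof (intro nn_integral_mono)
      fix s :: real
      show "ennreal (gauss_radial_density s) * indicator {0..r} s * ennreal (pi * s\<^sup>2 * c)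
          \<le> ennreal (gauss_radial_density s) * indicator {0..r} s * (\<integral>\<^sup>+w. indicator (cball 0 s) w * g w \<partial>lborel)"
        by (cases "s \<in> {0..r}") (auto intro!: mult_left_mono submean)
    qed
    finally show "(\<integral>\<^sup>+s. ennreal (gauss_radial_density s * (pi * s\<^sup>2)) * indicator {0..r} s \<partial>lborel) * ennreal c
      \<le> (\<integral>\<^sup>+s. ennreal (gauss_radial_density s) * indicator {0..r} s *
           (\<integral>\<^sup>+w. indicator (cball 0 s) w * g w \<partial>lborel) \<partial>lborel)" .
  qed simp
  finally show ?thesis
    unfolding nn_integral_cball_gauss_layers[OF assms(1)] er_def .
qed

lemma stft_weighted_submean:
  assumes h: "integrable lborel h" and [measurable]: "stft h \<in> borel_measurable borel" and r: "r \<ge> 0"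
  shows "ennreal (2 * (1 - exp (- pi * r\<^sup>2 / 2)) * cmod (stft h z))
     \<le> (\<integral>\<^sup>+w. indicator (cball z r) w * ennreal (cmod (stft h w)) \<partial>lborel)"
proof -
  obtain x \<omega> where z: "z = (x, \<omega>)" by (cases z)
  have [measurable]: "h \<in> borel_measurable lborel" using h by auto
  have "ennreal (2 * (1 - exp (- pi * r\<^sup>2 / 2)) * cmod (stft h z))
      \<le> (\<integral>\<^sup>+w. indicator (cball 0 r) w * ennreal (exp (- pi * (norm w)\<^sup>2 / 2))
            * ennreal (cmod (stft_profile h x \<omega> w)) \<partial>lborel)"
    unfolding z using r by (intro gauss_weighted_submean stft_disc_submean h) simp_all
  also have "\<dots> = (\<integral>\<^sup>+w. indicator (cball 0 r) w * ennreal (cmod (stft h (z + w))) \<partial>lborel)"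
    unfolding z norm_stft_shift by (simp add: ennreal_mult mult.assoc)
  also have "\<dots> = (\<integral>\<^sup>+w. indicator (cball z r) (z + w) * ennreal (cmod (stft h (z + w))) \<partial>lborel)"
    by (intro nn_integral_cong) (simp add: indicator_def dist_norm)
  also have "\<dots> = (\<integral>\<^sup>+w. indicator (cball z r) w * ennreal (cmod (stft h w)) \<partial>lborel)"
    by (rule nn_integral_lborel_translate[where f = "\<lambda>w. indicator (cball z r) w * ennreal (cmod (stft h w))"])
       measurable
  finally show ?thesis .
qed

lemma L1norm_nonneg: "L1norm F \<ge> 0"
  unfolding L1norm_def by simp

lemma ennreal_L1norm:
  "integrable lborel F \<Longrightarrow> ennreal (L1norm F) = (\<integral>\<^sup>+z. ennreal (cmod (F z)) \<partial>lborel)"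
  unfolding L1norm_def by (subst nn_integral_eq_integral) auto

lemma norm_stft_le_L1norm:
  assumes h: "integrable lborel h" and Vh: "integrable lborel (stft h)"
  shows "2 * (1 - exp (- pi / 2)) * cmod (stft h z) \<le> L1norm (stft h)"
proof -
  have "ennreal (2 * (1 - exp (- pi * 1\<^sup>2 / 2)) * cmod (stft h z))
      \<le> (\<integral>\<^sup>+w. indicator (cball z 1) w * ennreal (cmod (stft h w)) \<partial>lborel)"
    using Vh by (intro stft_weighted_submean h) auto
  also have "\<dots> \<le> (\<integral>\<^sup>+w. ennreal (cmod (stft h w)) \<partial>lborel)"
    by (intro nn_integral_mono) (auto simp: indicator_def)
  also have "\<dots> = ennreal (L1norm (stft h))" by (rule ennreal_L1norm[OF Vh, symmetric])
  finally show ?thesis using L1norm_nonneg by (simp add: ennreal_le_iff)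
qed

lemma stft_eq_0_if_L1norm_eq_0:
  assumes "integrable lborel h" and "integrable lborel (stft h)" and "L1norm (stft h) = 0"
  shows "stft h z = 0"
proof -
  have "2 * (1 - exp (- pi / 2)) * cmod (stft h z) \<le> 0"
    using norm_stft_le_L1norm[OF assms(1,2), of z] assms(3) by simp
  moreover have "0 < 2 * (1 - exp (- pi / 2))" by simp
  ultimately show ?thesis using pi_gt_zero by (auto simp: mult_le_0_iff)
qed

section \<open>Concentration estimate\<close>

lemma measure_inter_cball_le_nyq_rho:
  assumes D: "D \<in> sets borel" and R: "R > 0"
  shows "measure lborel (D \<inter> cball z (1 / R)) \<le> nyq_rho D R"
  unfolding nyq_rho_def
proof (rule cSUP_upper)
  show "bdd_above (range (\<lambda>z. measure lborel (D \<inter> cball z (1 / R))))"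
  proof (rule bdd_aboveI2)
    fix z :: "real \<times> real"
    have "emeasure lborel (cball z (1 / R)) < \<infinity>" by (intro emeasure_bounded_finite) simp
    then have "measure lborel (D \<inter> cball z (1 / R)) \<le> measure lborel (cball z (1 / R))"
      using D by (intro measure_mono_fmeasurable) (auto simp: fmeasurable_def)
    also have "\<dots> = pi * (1 / R)\<^sup>2" using R by (intro measure_cball_plane) simp
    finally show "measure lborel (D \<inter> cball z (1 / R)) \<le> pi * (1 / R)\<^sup>2" .
  qed
qed simp

lemma nn_integral_indicator_cball_swap:
  fixes \<phi> :: "'a::euclidean_space \<Rightarrow> ennreal"
  assumes [measurable]: "D \<in> sets borel" "\<phi> \<in> borel_measurable borel"
  shows "(\<integral>\<^sup>+z. indicator D z * (\<integral>\<^sup>+w. indicator (cball z r) w * \<phi> w \<partial>lborel) \<partial>lborel)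
    = (\<integral>\<^sup>+w. emeasure lborel (D \<inter> cball w r) * \<phi> w \<partial>lborel)"
proof -
  have "closed {p :: 'a \<times> 'a. dist (fst p) (snd p) \<le> r}"
    by (intro closed_Collect_le continuous_intros)
  then have [measurable]: "{p :: 'a \<times> 'a. dist (fst p) (snd p) \<le> r} \<in> sets borel" by simp
  have "(\<lambda>p :: 'a \<times> 'a. indicator D (snd p) * indicator {p. dist (fst p) (snd p) \<le> r} p * \<phi> (fst p))
      \<in> borel_measurable (lborel \<Otimes>\<^sub>M lborel)"
    by (rule borel_measurable_lborel_pair) measurable
  then have [measurable]: "(\<lambda>(w, z). indicator D z * indicator (cball w r) z * \<phi> w)
      \<in> borel_measurable (lborel \<Otimes>\<^sub>M lborel)"
    by (rule measurable_cong[THEN iffD1, rotated]) (auto simp: indicator_def)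
  have "(\<integral>\<^sup>+z. indicator D z * (\<integral>\<^sup>+w. indicator (cball z r) w * \<phi> w \<partial>lborel) \<partial>lborel)
      = (\<integral>\<^sup>+z. (\<integral>\<^sup>+w. indicator D z * indicator (cball w r) z * \<phi> w \<partial>lborel) \<partial>lborel)"
    by (intro nn_integral_cong)
       (simp add: indicator_def dist_commute mult_ac flip: nn_integral_cmult)
  also have "\<dots> = (\<integral>\<^sup>+w. (\<integral>\<^sup>+z. indicator D z * indicator (cball w r) z * \<phi> w \<partial>lborel) \<partial>lborel)"
    by (rule lborel_pair.Fubini') measurable
  also have "\<dots> = (\<integral>\<^sup>+w. emeasure lborel (D \<inter> cball w r) * \<phi> w \<partial>lborel)"
  proof (intro nn_integral_cong)
    fix w
    have "(\<integral>\<^sup>+z. indicator D z * indicator (cball w r) z * \<phi> w \<partial>lborel)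
        = (\<integral>\<^sup>+z. indicator (D \<inter> cball w r) z \<partial>lborel) * \<phi> w"
      by (subst nn_integral_multc[symmetric]) (auto intro!: nn_integral_cong simp: indicator_def)
    then show "(\<integral>\<^sup>+z. indicator D z * indicator (cball w r) z * \<phi> w \<partial>lborel)
        = emeasure lborel (D \<inter> cball w r) * \<phi> w" by simp
  qed
  finally show ?thesis .
qed

lemma concentration_bound:
  assumes h: "integrable lborel h" and Vh: "integrable lborel (stft h)"
    and D [measurable]: "D \<in> sets borel" and R: "R > 0"
  shows "2 * (1 - exp (- pi * (1 / R)\<^sup>2 / 2)) * L1norm (\<lambda>z. indicator D z * stft h z)
      \<le> nyq_rho D R * L1norm (stft h)"
proof -
  define r where "r = 1 / R"
  define K where "K = 2 * (1 - exp (- pi * r\<^sup>2 / 2))"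
  define \<rho> where "\<rho> = nyq_rho D R"
  have "r \<ge> 0" "K \<ge> 0" using R by (simp_all add: r_def K_def)
  have [measurable]: "stft h \<in> borel_measurable borel" using Vh by auto
  have "\<rho> \<ge> 0"
    using measure_inter_cball_le_nyq_rho[OF D R, of 0] unfolding \<rho>_def by (rule order_trans[rotated]) simp
  have "integrable lborel (\<lambda>z. indicator D z *\<^sub>R stft h z)"
    using Vh by (intro integrable_mult_indicator) auto
  moreover have "(\<lambda>z. indicator D z *\<^sub>R stft h z) = (\<lambda>z. indicator D z * stft h z)"
    by (auto simp: indicator_def fun_eq_iff)
  ultimately have PVh: "integrable lborel (\<lambda>z. indicator D z * stft h z)"
    by simp
  have "ennreal (K * L1norm (\<lambda>z. indicator D z * stft h z))
      = (\<integral>\<^sup>+z. indicator D z * ennreal (K * cmod (stft h z)) \<partial>lborel)"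
    using \<open>K \<ge> 0\<close> L1norm_nonneg
    by (simp add: ennreal_mult ennreal_L1norm[OF PVh] flip: nn_integral_cmult)
       (intro nn_integral_cong, simp add: indicator_def ennreal_mult norm_mult)
  also have "\<dots> \<le> (\<integral>\<^sup>+z. indicator D z * (\<integral>\<^sup>+w. indicator (cball z r) w * ennreal (cmod (stft h w)) \<partial>lborel) \<partial>lborel)"
    unfolding K_def
    by (intro nn_integral_mono mult_left_mono stft_weighted_submean h \<open>r \<ge> 0\<close>) simp_all
  also have "\<dots> = (\<integral>\<^sup>+w. emeasure lborel (D \<inter> cball w r) * ennreal (cmod (stft h w)) \<partial>lborel)"
    by (rule nn_integral_indicator_cball_swap) measurable
  also have "\<dots> \<le> (\<integral>\<^sup>+w. ennreal \<rho> * ennreal (cmod (stft h w)) \<partial>lborel)"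
  proof (intro nn_integral_mono mult_right_mono)
    fix w :: "real \<times> real"
    have "emeasure lborel (D \<inter> cball w r) < \<infinity>"
      by (intro emeasure_bounded_finite) (auto intro: bounded_subset[OF bounded_cball])
    then have "emeasure lborel (D \<inter> cball w r) = ennreal (measure lborel (D \<inter> cball w r))"
      by (intro emeasure_eq_ennreal_measure) auto
    also have "\<dots> \<le> ennreal \<rho>"
      unfolding \<rho>_def r_def by (intro ennreal_leI measure_inter_cball_le_nyq_rho D R)
    finally show "emeasure lborel (D \<inter> cball w r) \<le> ennreal \<rho>" .
  qed simp
  also have "\<dots> = ennreal (\<rho> * L1norm (stft h))"
    using \<open>\<rho> \<ge> 0\<close> L1norm_nonneg
    by (simp add: nn_integral_cmult ennreal_L1norm[OF Vh] ennreal_mult)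
  finally show ?thesis
    using \<open>\<rho> \<ge> 0\<close> L1norm_nonneg unfolding K_def r_def \<rho>_def by (simp add: ennreal_le_iff)
qed

section \<open>Injectivity of the STFT\<close>

lemma real_distribution_density_normalized:
  fixes p :: "real \<Rightarrow> real"
  assumes p: "integrable lborel p" "\<And>t. p t \<ge> 0" and c: "(\<integral>t. p t \<partial>lborel) = c" "c > 0"
  shows "real_distribution (density lborel (\<lambda>t. ennreal (p t / c)))"
proof -
  have [measurable]: "p \<in> borel_measurable borel" using p by auto
  have "emeasure (density lborel (\<lambda>t. ennreal (p t / c))) UNIV = (\<integral>\<^sup>+t. ennreal (p t / c) \<partial>lborel)"
    by (subst emeasure_density) auto
  also have "\<dots> = ennreal (\<integral>t. p t / c \<partial>lborel)"
    using p c by (intro nn_integral_eq_integral) auto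
  also have "\<dots> = 1" using c by simp
  finally show ?thesis
    by (auto simp: real_distribution_def real_distribution_axioms_def intro!: prob_spaceI)
qed

lemma char_density_normalized:
  fixes p :: "real \<Rightarrow> real"
  assumes p: "integrable lborel p" "\<And>t. p t \<ge> 0" and c: "c > 0"
  shows "char (density lborel (\<lambda>t. ennreal (p t / c))) \<theta> = (\<integral>t. p t *\<^sub>R iexp (\<theta> * t) \<partial>lborel) / c"
proof -
  have [measurable]: "p \<in> borel_measurable borel" using p by auto
  have "char (density lborel (\<lambda>t. ennreal (p t / c))) \<theta> = (\<integral>t. (p t / c) *\<^sub>R iexp (\<theta> * t) \<partial>lborel)"
    unfolding char_def using p c by (subst integral_density) (auto intro!: borel_measurable_continuous_onI continuous_intros)
  then show ?thesis by (simp add: scaleR_conv_of_real divide_inverse mult_ac)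
qed

text \<open>For nonnegative functions this is Levy's uniqueness theorem for characteristic functions,
  after normalisation to probability densities.\<close>

lemma fourier_unique_nonneg:
  fixes p q :: "real \<Rightarrow> real"
  assumes p: "integrable lborel p" "\<And>t. p t \<ge> 0" and q: "integrable lborel q" "\<And>t. q t \<ge> 0"
    and eq: "\<And>\<theta>. (\<integral>t. p t *\<^sub>R iexp (\<theta> * t) \<partial>lborel) = (\<integral>t. q t *\<^sub>R iexp (\<theta> * t) \<partial>lborel)"
  shows "AE t in lborel. p t = q t"
proof -
  define c where "c = (\<integral>t. p t \<partial>lborel)"
  have "complex_of_real (\<integral>t. p t \<partial>lborel) = complex_of_real (\<integral>t. q t \<partial>lborel)"
    using eq[of 0] by (simp add: scaleR_conv_of_real)
  then have cq: "(\<integral>t. q t \<partial>lborel) = c" unfolding c_def by simp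
  have "c \<ge> 0" unfolding c_def using p by simp
  then consider "c = 0" | "c > 0" by linarith
  then show ?thesis
  proof cases
    case 1
    have "AE t in lborel. p t = 0"
      using 1 p unfolding c_def by (subst (asm) integral_nonneg_eq_0_iff_AE) auto
    moreover have "(\<integral>t. q t \<partial>lborel) = 0" using 1 cq by simp
    then have "AE t in lborel. q t = 0"
      using q by (subst (asm) integral_nonneg_eq_0_iff_AE) auto
    ultimately show ?thesis by eventually_elim simp
  next
    case 2
    define M where "M f = density lborel (\<lambda>t. ennreal (f t / c))" for f :: "real \<Rightarrow> real"
    have "char (M p) = char (M q)"
      unfolding M_def using p q 2 eq by (simp add: fun_eq_iff char_density_normalized)
    then have "M p = M q"
      unfolding M_def using p q cq 2
      by (intro Levy_uniqueness real_distribution_density_normalized) (simp_all add: c_def)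
    then have "AE t in lborel. ennreal (p t / c) = ennreal (q t / c)"
      unfolding M_def using p q
      by (subst (asm) sigma_finite_measure.density_unique_iff[OF sigma_finite_lborel]) auto
    then show ?thesis
      by eventually_elim (use p q 2 in \<open>auto simp: ennreal_inj\<close>)
  qed
qed

lemma fourier_zero_real:
  fixes k :: "real \<Rightarrow> real"
  assumes k: "integrable lborel k" and zero: "\<And>\<theta>. (\<integral>t. k t *\<^sub>R iexp (\<theta> * t) \<partial>lborel) = 0"
  shows "AE t in lborel. k t = 0"
proof -
  define p where "p t = max (k t) 0" for t
  define q where "q t = max (- k t) 0" for t
  have k_eq: "k t = p t - q t" for t unfolding p_def q_def by auto
  have p: "integrable lborel p" and q: "integrable lborel q" unfolding p_def q_def using k by auto
  have "integrable lborel (\<lambda>t. f t *\<^sub>R iexp (\<theta> * t))" if "integrable lborel f" for f :: "real \<Rightarrow> real" and \<theta>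
    by (rule Bochner_Integration.integrable_bound[OF that]) (use that in \<open>auto simp: norm_mult\<close>)
  then have "(\<integral>t. p t *\<^sub>R iexp (\<theta> * t) \<partial>lborel) - (\<integral>t. q t *\<^sub>R iexp (\<theta> * t) \<partial>lborel) = 0" for \<theta>
    using zero[of \<theta>] p q by (simp add: k_eq scaleR_diff_left)
  then have "AE t in lborel. p t = q t"
    by (intro fourier_unique_nonneg[OF p _ q]) (auto simp: p_def q_def)
  then show ?thesis by eventually_elim (simp add: k_eq)
qed

lemma complex_of_real_Re_eq_cnj: "complex_of_real (Re z) = 1 / 2 * z + 1 / 2 * cnj z"
  using complex_add_cnj[of z] by (simp add: field_simps)

lemma complex_of_real_Im_eq_cnj: "complex_of_real (Im z) = - \<i> / 2 * z + \<i> / 2 * cnj z"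
  by (simp add: complex_eq_iff)

lemma fourier_zero_complex:
  fixes k :: "real \<Rightarrow> complex"
  assumes k: "integrable lborel k" and zero: "\<And>\<theta>. (\<integral>t. k t * iexp (\<theta> * t) \<partial>lborel) = 0"
  shows "AE t in lborel. k t = 0"
proof -
  have int: "integrable lborel (\<lambda>t. k t * iexp (\<theta> * t))" "integrable lborel (\<lambda>t. cnj (k t) * iexp (\<theta> * t))"
    for \<theta>
    by (rule Bochner_Integration.integrable_bound[OF k], use k in \<open>auto simp: norm_mult\<close>)+
  have zero_cnj: "(\<integral>t. cnj (k t) * iexp (\<theta> * t) \<partial>lborel) = 0" for \<theta>
  proof -
    have "(\<integral>t. cnj (k t) * iexp (\<theta> * t) \<partial>lborel) = (\<integral>t. cnj (k t * iexp (- \<theta> * t)) \<partial>lborel)"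
      by (intro Bochner_Integration.integral_cong) (auto simp: exp_cnj)
    also have "\<dots> = cnj (\<integral>t. k t * iexp (- \<theta> * t) \<partial>lborel)"
      by (rule Bochner_Integration.integral_cnj)
    also have "\<dots> = 0" by (simp only: zero complex_cnj_zero)
    finally show ?thesis .
  qed
  have zero_comb: "(\<integral>t. (a * k t + b * cnj (k t)) * iexp (\<theta> * t) \<partial>lborel) = 0" for a b \<theta>
  proof -
    have "(\<integral>t. (a * k t + b * cnj (k t)) * iexp (\<theta> * t) \<partial>lborel)
       = a * (\<integral>t. k t * iexp (\<theta> * t) \<partial>lborel) + b * (\<integral>t. cnj (k t) * iexp (\<theta> * t) \<partial>lborel)"
      using int[of \<theta>] by (simp add: distrib_right mult.assoc)
    then show ?thesis using zero zero_cnj by simp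
  qed
  have "AE t in lborel. Re (k t) = 0"
  proof (rule fourier_zero_real)
    show "(\<integral>t. Re (k t) *\<^sub>R iexp (\<theta> * t) \<partial>lborel) = 0" for \<theta>
      unfolding scaleR_conv_of_real complex_of_real_Re_eq_cnj by (rule zero_comb)
  qed (use k in auto)
  moreover have "AE t in lborel. Im (k t) = 0"
  proof (rule fourier_zero_real)
    show "(\<integral>t. Im (k t) *\<^sub>R iexp (\<theta> * t) \<partial>lborel) = 0" for \<theta>
      unfolding scaleR_conv_of_real complex_of_real_Im_eq_cnj by (rule zero_comb)
  qed (use k in auto)
  ultimately show ?thesis by eventually_elim (simp add: complex_eq_iff)
qed

text \<open>V h (0, omega) is the Fourier transform of h times the window, evaluated at omega.\<close>

lemma stft_eq_0_imp_AE_zero: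
  assumes h: "integrable lborel h" and zero: "\<And>\<omega>. stft h (0, \<omega>) = 0"
  shows "AE t in lborel. h t = 0"
proof -
  define k where "k t = h t * complex_of_real (gwin t)" for t
  have "integrable lborel k"
  proof (rule Bochner_Integration.integrable_bound)
    show "integrable lborel (\<lambda>t. 2 powr (1/4) * cmod (h t))" using h by auto
    have [measurable]: "h \<in> borel_measurable borel" using h by auto
    have "(\<lambda>t. complex_of_real (gwin t)) \<in> borel_measurable borel"
      unfolding gwin_def by (rule borel_measurable_continuous_onI) (intro continuous_intros)
    then show "k \<in> borel_measurable lborel" unfolding k_def by simp
    have "cmod (h t) * \<bar>gwin t\<bar> \<le> cmod (h t) * 2 powr (1/4)" for t
      by (intro mult_left_mono) (auto simp: gwin_def abs_mult)
    then show "AE t in lborel. norm (k t) \<le> norm (2 powr (1/4) * cmod (h t))"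
      by (intro AE_I2) (simp add: k_def norm_mult mult.commute)
  qed
  moreover have "(\<integral>t. k t * iexp (\<theta> * t) \<partial>lborel) = stft h (0, - \<theta> / (2 * pi))" for \<theta>
  proof -
    have "- 2 * complex_of_real pi * \<i> * complex_of_real (- \<theta> / (2 * pi)) * complex_of_real t
        = \<i> * complex_of_real (\<theta> * t)" for t
      by (simp add: field_simps)
    then show ?thesis unfolding stft_def k_def by (simp add: mult.assoc)
  qed
  ultimately have "AE t in lborel. k t = 0"
    using zero by (intro fourier_zero_complex) auto
  then show ?thesis by eventually_elim (simp add: k_def gwin_def)
qed

lemma integral_std_normal_density_iexp:
  "(\<integral>y. std_normal_density y *\<^sub>R iexp (\<theta> * y) \<partial>lborel) = complex_of_real (exp (- \<theta>\<^sup>2 / 2))"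
proof -
  have "char std_normal_distribution \<theta> = (\<integral>y. std_normal_density y *\<^sub>R iexp (\<theta> * y) \<partial>lborel)"
    unfolding char_def
    by (subst integral_density) (auto intro!: borel_measurable_continuous_onI continuous_intros)
  then show ?thesis by (simp add: char_std_normal_distribution)
qed

lemma gwin_mult_gwin_shift:
  "gwin t * gwin (t - x) = sqrt 2 * exp (- pi * x\<^sup>2 / 2) * exp (- 2 * pi * (t - x / 2)\<^sup>2)"
proof -
  have "2 powr (1/4) * 2 powr (1/4) = (2 :: real) powr (1/2)" by (simp flip: powr_add)
  then have root: "2 powr (1/4) * 2 powr (1/4) = sqrt (2 :: real)" by (simp add: powr_half_sqrt)
  have "- pi * t\<^sup>2 + - pi * (t - x)\<^sup>2 = - pi * x\<^sup>2 / 2 + - 2 * pi * (t - x / 2)\<^sup>2"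
    by (simp add: power2_eq_square algebra_simps)
  then have "exp (- pi * t\<^sup>2) * exp (- pi * (t - x)\<^sup>2) = exp (- pi * x\<^sup>2 / 2) * exp (- 2 * pi * (t - x / 2)\<^sup>2)"
    by (simp flip: exp_add)
  then show ?thesis
    unfolding gwin_def by (simp add: root[symmetric] mult_ac)
qed

text \<open>Substituting t = x/2 + y/(2 sqrt pi) turns the integral into the characteristic function of
  the standard normal distribution.\<close>

lemma stft_gwin:
  "stft (\<lambda>t. complex_of_real (gwin t)) (x, \<omega>)
     = complex_of_real (exp (- pi * (x\<^sup>2 + \<omega>\<^sup>2) / 2)) * exp (- \<i> * complex_of_real (pi * \<omega> * x))"
proof -
  define c where "c = 1 / (2 * sqrt pi)"
  define \<theta> where "\<theta> = - 2 * pi * \<omega> * c"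
  define f where "f t = complex_of_real (gwin t) * cnj (complex_of_real (gwin (t - x))) *
      exp (- 2 * complex_of_real pi * \<i> * complex_of_real \<omega> * complex_of_real t)" for t
  define B where "B = complex_of_real (sqrt 2 * sqrt (2 * pi) * exp (- pi * x\<^sup>2 / 2))
    * exp (- \<i> * complex_of_real (pi * \<omega> * x))"
  have "c > 0" unfolding c_def by simp
  have c_sq: "c\<^sup>2 = 1 / (4 * pi)" unfolding c_def by (simp add: power2_eq_square)
  have f_subst: "f (x / 2 + c * y) = B * (std_normal_density y *\<^sub>R iexp (\<theta> * y))" for y
  proof -
    have "- 2 * pi * (x / 2 + c * y - x / 2)\<^sup>2 = - y\<^sup>2 / 2"
      using c_sq by (simp add: power2_eq_square)
    then have gw: "gwin (x / 2 + c * y) * gwin (x / 2 + c * y - x) = sqrt 2 * exp (- pi * x\<^sup>2 / 2) * exp (- y\<^sup>2 / 2)"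
      using gwin_mult_gwin_shift[of "x / 2 + c * y" x] by simp
    have ex: "- 2 * complex_of_real pi * \<i> * complex_of_real \<omega> * complex_of_real (x / 2 + c * y)
        = - \<i> * complex_of_real (pi * \<omega> * x) + \<i> * complex_of_real (\<theta> * y)"
      unfolding \<theta>_def by (simp add: algebra_simps)
    have "f (x / 2 + c * y) = complex_of_real (gwin (x / 2 + c * y) * gwin (x / 2 + c * y - x)) *
        exp (- 2 * complex_of_real pi * \<i> * complex_of_real \<omega> * complex_of_real (x / 2 + c * y))"
      unfolding f_def by simp
    also have "\<dots> = complex_of_real (sqrt 2 * exp (- pi * x\<^sup>2 / 2) * exp (- y\<^sup>2 / 2)) *
        (exp (- \<i> * complex_of_real (pi * \<omega> * x)) * exp (\<i> * complex_of_real (\<theta> * y)))"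
      unfolding gw ex exp_add ..
    also have "\<dots> = B * (std_normal_density y *\<^sub>R iexp (\<theta> * y))"
      unfolding B_def std_normal_density_def scaleR_conv_of_real of_real_mult
      by (simp add: mult_ac)
    finally show ?thesis .
  qed
  have "sqrt 2 * sqrt (2 * pi) = 2 * sqrt pi" by (simp add: real_sqrt_mult)
  then have c_root: "c * (sqrt 2 * sqrt (2 * pi)) = 1" unfolding c_def by simp
  have "- \<theta>\<^sup>2 / 2 = - pi * \<omega>\<^sup>2 / 2"
    unfolding \<theta>_def using c_sq by (simp add: power2_eq_square field_simps)
  then have "exp (- pi * x\<^sup>2 / 2) * exp (- \<theta>\<^sup>2 / 2) = exp (- pi * (x\<^sup>2 + \<omega>\<^sup>2) / 2)"
    by (simp add: algebra_simps add_divide_distrib flip: exp_add)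
  moreover have "stft (\<lambda>t. complex_of_real (gwin t)) (x, \<omega>) = \<bar>c\<bar> *\<^sub>R (\<integral>y. f (x / 2 + c * y) \<partial>lborel)"
    unfolding stft_def f_def[symmetric] prod.case using \<open>c > 0\<close>
    by (intro lborel_integral_real_affine) simp
  ultimately show ?thesis
    using \<open>c > 0\<close> c_root
    unfolding f_subst integral_mult_right_zero integral_std_normal_density_iexp B_def
    by (simp add: scaleR_conv_of_real mult_ac flip: of_real_mult)
qed

lemma integrable_exp_neg_square:
  assumes "a > 0"
  shows "integrable lborel (\<lambda>x::real. exp (- a * x\<^sup>2))"
proof -
  define \<sigma> where "\<sigma> = 1 / sqrt (2 * a)"
  have "\<sigma> > 0" using assms by (simp add: \<sigma>_def)
  have "\<sigma>\<^sup>2 = 1 / (2 * a)" using assms by (simp add: \<sigma>_def power_divide)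
  then have "exp (- a * x\<^sup>2) = sqrt (2 * pi * \<sigma>\<^sup>2) * normal_density 0 \<sigma> x" for x
    using assms \<open>\<sigma> > 0\<close> unfolding normal_density_def by (simp add: field_simps)
  then show ?thesis
    using \<open>\<sigma> > 0\<close> by (simp add: integrable_normal_density)
qed

lemma integrable_gwin: "integrable lborel (\<lambda>t. complex_of_real (gwin t))"
  unfolding gwin_def by (intro integrable_of_real integrable_mult_right integrable_exp_neg_square) simp

lemma integrable_stft_gwin: "integrable lborel (stft (\<lambda>t. complex_of_real (gwin t)))"
proof -
  define g where "g x = exp (- (pi / 2) * x\<^sup>2)" for x :: real
  have "integrable lborel g" unfolding g_def by (rule integrable_exp_neg_square) simp
  then have "integrable lborel (\<lambda>p :: real \<times> real. g (fst p) * g (snd p))"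
    using integrable_lborel_pair_mult[of g g] by (simp add: lborel_prod)
  then show ?thesis
  proof (rule Bochner_Integration.integrable_bound)
    have "stft (\<lambda>t. complex_of_real (gwin t)) = (\<lambda>p. complex_of_real (exp (- pi * ((fst p)\<^sup>2 + (snd p)\<^sup>2) / 2))
        * exp (- \<i> * complex_of_real (pi * snd p * fst p)))"
      by (auto simp: fun_eq_iff stft_gwin)
    moreover have "(\<lambda>p :: real \<times> real. complex_of_real (exp (- pi * ((fst p)\<^sup>2 + (snd p)\<^sup>2) / 2))
        * exp (- \<i> * complex_of_real (pi * snd p * fst p))) \<in> borel_measurable borel"
      by (rule borel_measurable_continuous_onI) (intro continuous_intros, auto)
    ultimately show "stft (\<lambda>t. complex_of_real (gwin t)) \<in> borel_measurable lborel" by simp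
    have "exp (- pi * (x\<^sup>2 + \<omega>\<^sup>2) / 2) = g x * g \<omega>" for x \<omega>
      unfolding g_def by (simp add: algebra_simps add_divide_distrib flip: exp_add) (simp add: field_simps)
    then show "AE p in lborel. norm (stft (\<lambda>t. complex_of_real (gwin t)) p) \<le> norm (g (fst p) * g (snd p))"
      by (intro AE_I2) (auto simp: stft_gwin norm_mult)
  qed
qed

lemma gwin_in_M1: "(\<lambda>t. complex_of_real (gwin t)) \<in> M1"
  unfolding M1_def using integrable_gwin integrable_stft_gwin by simp

lemma L1norm_stft_gwin_neq_0: "L1norm (stft (\<lambda>t. complex_of_real (gwin t))) \<noteq> 0"
  using stft_eq_0_if_L1norm_eq_0[OF integrable_gwin integrable_stft_gwin, of "(0, 0)"]
  by (auto simp: stft_gwin)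

section \<open>Robust recovery from the observation\<close>

lemma L1norm_add_ge:
  fixes N F :: "real \<times> real \<Rightarrow> complex"
  assumes N: "integrable lborel N" and F: "integrable lborel F"
  shows "L1norm N + L1norm F - 2 * L1norm (\<lambda>z. indicator {z. N z \<noteq> 0} z * F z)
    \<le> L1norm (\<lambda>z. N z + F z)"
proof -
  define D where "D = {z. N z \<noteq> 0}"
  have [measurable]: "N \<in> borel_measurable borel" using N by auto
  have "integrable lborel (\<lambda>z. indicator D z *\<^sub>R cmod (F z))"
    using F unfolding D_def by (intro integrable_mult_indicator integrable_norm) auto
  then have PF: "integrable lborel (\<lambda>z. indicator D z * cmod (F z))" by simp
  have "L1norm (\<lambda>z. indicator D z * F z) = (\<integral>z. indicator D z * cmod (F z) \<partial>lborel)"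
    unfolding L1norm_def by (intro Bochner_Integration.integral_cong) (auto simp: norm_mult indicator_def)
  then have "L1norm N + L1norm F - 2 * L1norm (\<lambda>z. indicator D z * F z)
      = (\<integral>z. cmod (N z) + cmod (F z) - 2 * (indicator D z * cmod (F z)) \<partial>lborel)"
    unfolding L1norm_def using N F PF by simp
  also have "\<dots> \<le> (\<integral>z. cmod (N z + F z) \<partial>lborel)"
  proof (rule integral_mono)
    fix z
    show "cmod (N z) + cmod (F z) - 2 * (indicator D z * cmod (F z)) \<le> cmod (N z + F z)"
      using norm_diff_ineq[of "N z" "F z"] by (cases "z \<in> D") (auto simp: D_def)
  qed (use N F PF in auto)
  finally show ?thesis unfolding D_def L1norm_def .
qed

lemma M1_diff:
  assumes "f \<in> M1" "g \<in> M1"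
  shows "(\<lambda>t. f t - g t) \<in> M1" and "stft (\<lambda>t. f t - g t) = (\<lambda>z. stft f z - stft g z)"
proof -
  show diff: "stft (\<lambda>t. f t - g t) = (\<lambda>z. stft f z - stft g z)"
    using assms by (auto simp: M1_def fun_eq_iff stft_diff)
  show "(\<lambda>t. f t - g t) \<in> M1"
    using assms by (simp add: M1_def diff)
qed

lemma conc_delta_le:
  assumes "\<And>h. h \<in> M1 \<Longrightarrow> L1norm (\<lambda>z. indicator D z * stft h z) \<le> \<kappa> * L1norm (stft h)"
  shows "conc_delta D \<le> \<kappa>"
  unfolding conc_delta_def
proof (rule cSUP_least)
  show "{f \<in> M1. L1norm (stft f) \<noteq> 0} \<noteq> {}"
    using gwin_in_M1 L1norm_stft_gwin_neq_0 by blast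
  fix h assume "h \<in> {f \<in> M1. L1norm (stft f) \<noteq> 0}"
  moreover from this have "L1norm (stft h) > 0"
    using L1norm_nonneg[of "stft h"] by simp
  ultimately show "L1norm (\<lambda>z. indicator D z * stft h z) / L1norm (stft h) \<le> \<kappa>"
    using assms by (simp add: divide_le_eq)
qed

text \<open>Uses 1 - e^(-2a) = (1 - e^(-a)) (1 + e^(-a)).\<close>

lemma nyq_ratio_lt_half:
  assumes R: "R > 0" and \<rho>: "\<rho> < (1 - exp (- pi / R\<^sup>2)) / 2"
  shows "\<rho> / (2 * (1 - exp (- pi * (1 / R)\<^sup>2 / 2))) < 1 / 2"
proof -
  define e where "e = exp (- pi * (1 / R)\<^sup>2 / 2)"
  have "0 < e" "e < 1" unfolding e_def using R by auto
  have "exp (- pi / R\<^sup>2) = e\<^sup>2"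
    unfolding e_def by (simp add: power2_eq_square power_divide flip: exp_add)
  then have "\<rho> < (1 - e) * (1 + e) / 2" using \<rho> by (simp add: power2_eq_square algebra_simps)
  then have "\<rho> / (2 * (1 - e)) < (1 + e) / 4"
    using \<open>e < 1\<close> by (simp add: field_simps)
  also have "\<dots> < 1 / 2" using \<open>e < 1\<close> by simp
  finally show ?thesis unfolding e_def .
qed

lemma concentration_bound_M1:
  assumes "h \<in> M1" and "D \<in> sets borel" and "R > 0"
  shows "L1norm (\<lambda>z. indicator D z * stft h z)
    \<le> nyq_rho D R / (2 * (1 - exp (- pi * (1 / R)\<^sup>2 / 2))) * L1norm (stft h)"
  using concentration_bound[of h D R] assms by (simp add: M1_def field_simps)

lemma L1norm_residual_lower_bound:
  assumes f: "f \<in> M1" and g: "g \<in> M1" and N: "integrable lborel N"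
    and conc: "\<And>h. h \<in> M1 \<Longrightarrow> L1norm (\<lambda>z. indicator {z. N z \<noteq> 0} z * stft h z) \<le> \<kappa> * L1norm (stft h)"
  shows "L1norm N + (1 - 2 * \<kappa>) * L1norm (stft (\<lambda>t. g t - f t))
    \<le> L1norm (\<lambda>z. (stft f z + N z) - stft g z)"
proof -
  define h where "h t = f t - g t" for t
  have "h \<in> M1" and Vh: "stft h = (\<lambda>z. stft f z - stft g z)"
    unfolding h_def using M1_diff[OF f g] by simp_all
  moreover have "(\<lambda>z. N z + stft h z) = (\<lambda>z. (stft f z + N z) - stft g z)"
    by (simp add: Vh fun_eq_iff)
  ultimately have "L1norm N + L1norm (stft h) - 2 * L1norm (\<lambda>z. indicator {z. N z \<noteq> 0} z * stft h z)
      \<le> L1norm (\<lambda>z. (stft f z + N z) - stft g z)"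
    using L1norm_add_ge[OF N, of "stft h"] by (simp add: M1_def)
  moreover have "L1norm (stft (\<lambda>t. g t - f t)) = L1norm (stft h)"
    unfolding M1_diff(2)[OF g f] Vh L1norm_def by (simp add: norm_minus_commute)
  ultimately show ?thesis
    using conc[OF \<open>h \<in> M1\<close>] by (simp add: algebra_simps)
qed

lemma AE_eq_if_L1norm_stft_diff_eq_0:
  assumes f: "f \<in> M1" and g: "g \<in> M1" and zero: "L1norm (stft (\<lambda>t. g t - f t)) = 0"
  shows "AE t in lborel. g t = f t"
proof -
  have "(\<lambda>t. g t - f t) \<in> M1" by (rule M1_diff(1)[OF g f])
  then have "AE t in lborel. g t - f t = 0"
    using zero unfolding M1_def by (intro stft_eq_0_imp_AE_zero stft_eq_0_if_L1norm_eq_0) auto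
  then show ?thesis by eventually_elim simp
qed

theorem corollary1:
  fixes f :: "real \<Rightarrow> complex" and N :: "real \<times> real \<Rightarrow> complex" and R :: real
  assumes "f \<in> M1"
    and "integrable lborel N"
    and "R > 0"
    and "nyq_rho {z. N z \<noteq> 0} R < (1 - exp (- pi / R\<^sup>2)) / 2"
  shows "conc_delta {z. N z \<noteq> 0} < 1 / 2
    \<and> (\<forall>g \<in> M1. L1norm (\<lambda>z. (stft f z + N z) - stft f z)
                  \<le> L1norm (\<lambda>z. (stft f z + N z) - stft g z))
    \<and> (\<forall>g \<in> M1. (\<forall>h \<in> M1. L1norm (\<lambda>z. (stft f z + N z) - stft g z)
                              \<le> L1norm (\<lambda>z. (stft f z + N z) - stft h z))
                 \<longrightarrow> (AE t in lborel. g t = f t))"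
proof -
  define D where "D = {z. N z \<noteq> 0}"
  define \<kappa> where "\<kappa> = nyq_rho D R / (2 * (1 - exp (- pi * (1 / R)\<^sup>2 / 2)))"
  have "\<kappa> < 1 / 2" unfolding \<kappa>_def D_def using assms(3,4) by (rule nyq_ratio_lt_half)
  have "D \<in> sets borel" unfolding D_def using assms(2) by measurable
  have conc: "L1norm (\<lambda>z. indicator D z * stft h z) \<le> \<kappa> * L1norm (stft h)" if "h \<in> M1" for h
    unfolding \<kappa>_def using that \<open>D \<in> sets borel\<close> assms(3) by (rule concentration_bound_M1)
  have lower: "L1norm N + (1 - 2 * \<kappa>) * L1norm (stft (\<lambda>t. g t - f t))
      \<le> L1norm (\<lambda>z. (stft f z + N z) - stft g z)" if "g \<in> M1" for g
    using L1norm_residual_lower_bound[OF assms(1) that assms(2)] conc unfolding D_def by blast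
  have slack: "0 \<le> (1 - 2 * \<kappa>) * L1norm (stft (\<lambda>t. g t - f t))" for g
    using \<open>\<kappa> < 1 / 2\<close> L1norm_nonneg by simp
  have minimal: "L1norm (\<lambda>z. (stft f z + N z) - stft f z) \<le> L1norm (\<lambda>z. (stft f z + N z) - stft g z)"
    if "g \<in> M1" for g
    using lower[OF that] slack[of g] by simp
  have unique: "AE t in lborel. g t = f t"
    if "g \<in> M1" and "L1norm (\<lambda>z. (stft f z + N z) - stft g z) \<le> L1norm (\<lambda>z. (stft f z + N z) - stft f z)" for g
  proof (rule AE_eq_if_L1norm_stft_diff_eq_0[OF assms(1) that(1)])
    have "(1 - 2 * \<kappa>) * L1norm (stft (\<lambda>t. g t - f t)) \<le> 0"
      using lower[OF that(1)] that(2) by simp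
    then show "L1norm (stft (\<lambda>t. g t - f t)) = 0"
      using \<open>\<kappa> < 1 / 2\<close> L1norm_nonneg[of "stft (\<lambda>t. g t - f t)"] by (simp add: mult_le_0_iff)
  qed
  show ?thesis
    using conc_delta_le[OF conc] \<open>\<kappa> < 1 / 2\<close> minimal unique assms(1) unfolding D_def by fastforce
qed

end
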